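(* Let $n\ge 1$, $m\ge 2$ and $k\in\{0,\dots,n-1\}$, and let $\mathcal{C}^k_{ac}$ be the class of all complete acyclic $k$-bounded CP-nets over $n$ variables of domain size $m$, over the instance space $\mathcal{X}_{swap}$. Then \[\mathrm{RTD}(\mathcal{C}^k_{ac})=(m-1)\mathcal{M}_k=(m-1)(n-k)m^k+m^k-1.\]
   Context: Variables $V=\{v_1,\dots,v_n\}$, each $v_i$ with a finite domain $D_{v_i}$ of size $m$. An outcome assigns a value to every variable; $\mathcal{O}_X$ denotes assignments to $X\subseteq V$. A CP-net specifies for each $v_i$ a parent set $Pa(v_i)\subseteq V\setminus\{v_i\}$ and, for each context $\gamma\in\mathcal{O}_{Pa(v_i)}$, either a strict total order $\succ^{v_i}_\gamma$ on $D_{v_i}$ or nothing; it is complete if an order is given for every variable and context; parents are non-dummy (each parent actually affects the preferences). It is acyclic if the graph with edges $(v_j,v_i)$ for $v_j\in Pa(v_i)$ is acyclic, and $k$-bounded if all parent sets have size $\le k$. Improving flip: changing only $v_i$ from $o[v_i]$ to a value preferred under $\succ^{v_i}_{o[Pa(v_i)]}$; $o'\succ o$ iff a nonempty sequence of improving flips leads from $o$ to $o'$. A swap is an ordered pair $x=(x.1,x.2)$ of outcomes differing in exactly one variable; $\mathcal{X}_{swap}$ contains, for each unordered such pair, exactly one of its two orderings (fixed arbitrarily). A CP-net $N$ is the concept $c_N(x)=1$ iff $x.1\succ x.2$. For a concept class $\mathcal{C}$ and $c\in\mathcal{C}$, a teaching set for $c$ is a set of labeled examples with which $c$ is the only consistent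 concept in $\mathcal{C}$; $\mathrm{TD}(c,\mathcal{C})$ is the minimum size of a teaching set, $\mathrm{TD}_{min}(\mathcal{C})=\min_{c\in\mathcal{C}}\mathrm{TD}(c,\mathcal{C})$. Recursive teaching dimension: $\mathcal{C}_0=\mathcal{C}$, $\mathcal{C}_{i+1}=\mathcal{C}_i\setminus\{c\in\mathcal{C}_i:\mathrm{TD}(c,\mathcal{C}_i)=\mathrm{TD}_{min}(\mathcal{C}_i)\}$ while $\mathcal{C}_i\neq\emptyset$, and $\mathrm{RTD}(\mathcal{C})=\max_i\mathrm{TD}_{min}(\mathcal{C}_i)$. $\mathcal{M}_k=(n-k)m^k+\frac{m^k-1}{m-1}$. *)

theory Defs
  imports "HOL-Library.FuncSet"
begin

(* Variables are v_0,...,v_{n-1} (indices < n); every domain is {..<m}.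
   An outcome is an element of PiE {..<n} (\<lambda>_. {..<m}). *)

definition outcomes :: "nat \<Rightarrow> nat \<Rightarrow> (nat \<Rightarrow> nat) set" where
  "outcomes n m = Pi\<^sub>E {..<n} (\<lambda>_. {..<m})"

definition assignments :: "nat set \<Rightarrow> nat \<Rightarrow> (nat \<Rightarrow> nat) set" where
  "assignments X m = Pi\<^sub>E X (\<lambda>_. {..<m})"

definition swaps :: "nat \<Rightarrow> nat \<Rightarrow> ((nat \<Rightarrow> nat) \<times> (nat \<Rightarrow> nat)) set" where
  "swaps n m = {(a, b). a \<in> outcomes n m \<and> b \<in> outcomes n m \<and> card {i. i < n \<and> a i \<noteq> b i} = 1}"

definition is_swap_instance_space ::
  "nat \<Rightarrow> nat \<Rightarrow> ((nat \<Rightarrow> nat) \<times> (nat \<Rightarrow> nat)) set \<Rightarrow> bool" where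
  "is_swap_instance_space n m X \<longleftrightarrow>
     X \<subseteq> swaps n m \<and> (\<forall>a b. (a, b) \<in> swaps n m \<longrightarrow> ((a, b) \<in> X \<longleftrightarrow> (b, a) \<notin> X))"

(* A CP-net is given by a parent function Pa and, for each variable i and context
   gamma (assignment to Pa i), a relation pref i gamma on values, where
   (a, b) \<in> pref i gamma means  a \<succ>^{v_i}_gamma b. *)
type_synonym cpnet = "(nat \<Rightarrow> nat set) \<times> (nat \<Rightarrow> (nat \<Rightarrow> nat) \<Rightarrow> nat rel)"

definition complete_cpnet :: "nat \<Rightarrow> nat \<Rightarrow> cpnet \<Rightarrow> bool" where
  "complete_cpnet n m N \<longleftrightarrow>
     (let Pa = fst N; pref = snd N in
       (\<forall>i<n. Pa i \<subseteq> {..<n} - {i}) \<and>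
       (\<forall>i<n. \<forall>\<gamma>\<in>assignments (Pa i) m.
           pref i \<gamma> \<subseteq> {..<m} \<times> {..<m} \<and> strict_linear_order_on {..<m} (pref i \<gamma>)) \<and>
       (\<forall>i<n. \<forall>j\<in>Pa i. \<exists>\<gamma>\<in>assignments (Pa i) m. \<exists>\<gamma>'\<in>assignments (Pa i) m.
           (\<forall>l\<in>Pa i - {j}. \<gamma> l = \<gamma>' l) \<and> pref i \<gamma> \<noteq> pref i \<gamma>'))"

definition acyclic_cpnet :: "nat \<Rightarrow> cpnet \<Rightarrow> bool" where
  "acyclic_cpnet n N \<longleftrightarrow> acyclic {(j, i). i < n \<and> j \<in> fst N i}"

definition k_bounded_cpnet :: "nat \<Rightarrow> nat \<Rightarrow> cpnet \<Rightarrow> bool" where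
  "k_bounded_cpnet n k N \<longleftrightarrow> (\<forall>i<n. card (fst N i) \<le> k)"

(* improving flips: (o, o') means o' is obtained from o by one improving flip *)
definition improving_flip :: "nat \<Rightarrow> nat \<Rightarrow> cpnet \<Rightarrow> ((nat \<Rightarrow> nat) \<times> (nat \<Rightarrow> nat)) set" where
  "improving_flip n m N = {(o1, o2). o1 \<in> outcomes n m \<and> o2 \<in> outcomes n m \<and>
      (\<exists>i<n. (\<forall>l. l \<noteq> i \<longrightarrow> o2 l = o1 l) \<and>
              (o2 i, o1 i) \<in> snd N i (restrict o1 (fst N i)))}"

definition cp_succ :: "nat \<Rightarrow> nat \<Rightarrow> cpnet \<Rightarrow> (nat \<Rightarrow> nat) \<Rightarrow> (nat \<Rightarrow> nat) \<Rightarrow> bool" where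
  "cp_succ n m N p' p \<longleftrightarrow> (p, p') \<in> (improving_flip n m N)\<^sup>+"

definition cp_concept :: "nat \<Rightarrow> nat \<Rightarrow> ((nat \<Rightarrow> nat) \<times> (nat \<Rightarrow> nat)) set \<Rightarrow> cpnet
    \<Rightarrow> ((nat \<Rightarrow> nat) \<times> (nat \<Rightarrow> nat)) set" where
  "cp_concept n m X N = {x \<in> X. cp_succ n m N (fst x) (snd x)}"

definition C_ac :: "nat \<Rightarrow> nat \<Rightarrow> nat \<Rightarrow> ((nat \<Rightarrow> nat) \<times> (nat \<Rightarrow> nat)) set
    \<Rightarrow> ((nat \<Rightarrow> nat) \<times> (nat \<Rightarrow> nat)) set set" where
  "C_ac n m k X = cp_concept n m X ` {N. complete_cpnet n m N \<and> acyclic_cpnet n N \<and> k_bounded_cpnet n k N}"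

definition teaching_set :: "'x set \<Rightarrow> 'x set set \<Rightarrow> 'x set \<Rightarrow> 'x set \<Rightarrow> bool" where
  "teaching_set X C c S \<longleftrightarrow> S \<subseteq> X \<and> finite S \<and>
     (\<forall>c'\<in>C. (\<forall>x\<in>S. x \<in> c' \<longleftrightarrow> x \<in> c) \<longrightarrow> c' = c)"

definition TD :: "'x set \<Rightarrow> 'x set set \<Rightarrow> 'x set \<Rightarrow> nat" where
  "TD X C c = (LEAST t. \<exists>S. teaching_set X C c S \<and> card S = t)"

definition TD_min :: "'x set \<Rightarrow> 'x set set \<Rightarrow> nat" where
  "TD_min X C = Min ((TD X C) ` C)"

fun rtd_layer :: "'x set \<Rightarrow> 'x set set \<Rightarrow> nat \<Rightarrow> 'x set set" where
  "rtd_layer X C 0 = C"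
| "rtd_layer X C (Suc i) =
     (let Ci = rtd_layer X C i in Ci - {c \<in> Ci. TD X Ci c = TD_min X Ci})"

definition RTD :: "'x set \<Rightarrow> 'x set set \<Rightarrow> nat" where
  "RTD X C = Max {TD_min X (rtd_layer X C i) | i. rtd_layer X C i \<noteq> {}}"

definition M_k :: "nat \<Rightarrow> nat \<Rightarrow> nat \<Rightarrow> nat" where
  "M_k n m k = (n - k) * m ^ k + (m ^ k - 1) div (m - 1)"

end

theory Submission
  imports Defs "HOL-Combinatorics.Transposition"
begin

(* Code a swap by its variable i, the context of a fixed superset of the parents of i, and
   the lower of the two ranks it exchanges in the local order.  Every acyclic k-bounded parent
   graph extends to one in which the variable at position p of a topological order has exactly
   min p k parents, so there are (m - 1) M_k codes.

   In a complete acyclic CP-net a swap is ordered by the local order of its variable alone.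
   Lower bound: a teaching set needs a swap of every code, since transposing two adjacent
   values of one local order in one context gives another net of the class that disagrees
   with the given one only on swaps of that code.  Upper bound: in any subclass, the net with
   the most parents is taught by the swaps of adjacent values in which all non-parents are 0;
   agreement on them forces first the local orders, then (by maximality) the parent sets, to
   coincide.  Hence in the recursive teaching plan the first layer has TD_min exactly
   (m - 1) M_k and no layer has more. *)

section \<open>Swaps and outcomes\<close>

definition swap_at :: "nat \<Rightarrow> (nat \<Rightarrow> 'a) \<Rightarrow> (nat \<Rightarrow> 'a) \<Rightarrow> bool" where
  "swap_at i a b \<longleftrightarrow> a i \<noteq> b i \<and> (\<forall>l. l \<noteq> i \<longrightarrow> a l = b l)"

lemma swap_at_upd: "p \<noteq> q \<Longrightarrow> swap_at i (a(i := p)) (a(i := q))"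
  by (simp add: swap_at_def)

lemma swap_at_eq_cases:
  assumes "swap_at i a b" "swap_at i a' b'" "\<forall>l. l \<noteq> i \<longrightarrow> a' l = a l" "{a' i, b' i} = {a i, b i}"
  shows "(a', b') = (a, b) \<or> (a', b') = (b, a)"
proof -
  have off_i: "a' l = a l" "b' l = a l" "b l = a l" if "l \<noteq> i" for l
    using assms(1-3) that unfolding swap_at_def by metis+
  from assms(4) consider "a' i = a i" "b' i = b i" | "a' i = b i" "b' i = a i"
    by (auto simp: doubleton_eq_iff)
  then show ?thesis
  proof cases
    case 1
    have "a' x = a x \<and> b' x = b x" for x using 1 off_i by (cases "x = i") auto
    then show ?thesis by (simp add: fun_eq_iff)
  next
    case 2
    have "a' x = b x \<and> b' x = a x" for x using 2 off_i by (cases "x = i") auto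
    then show ?thesis by (simp add: fun_eq_iff)
  qed
qed

lemma outcome_less: "a \<in> outcomes n m \<Longrightarrow> i < n \<Longrightarrow> a i < m"
  by (auto simp: outcomes_def)

lemma outcome_undefined: "a \<in> outcomes n m \<Longrightarrow> \<not> i < n \<Longrightarrow> a i = undefined"
  by (auto simp: outcomes_def PiE_def extensional_def)

lemma outcome_upd: "a \<in> outcomes n m \<Longrightarrow> i < n \<Longrightarrow> p < m \<Longrightarrow> a(i := p) \<in> outcomes n m"
  by (auto simp: outcomes_def PiE_def extensional_def)

lemma swap_at_less: "a \<in> outcomes n m \<Longrightarrow> b \<in> outcomes n m \<Longrightarrow> swap_at i a b \<Longrightarrow> i < n"
  by (metis outcome_undefined swap_at_def)

lemma swaps_iff:
  "(a, b) \<in> swaps n m \<longleftrightarrow> a \<in> outcomes n m \<and> b \<in> outcomes n m \<and> (\<exists>i. swap_at i a b)"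
proof -
  have "card {l. l < n \<and> a l \<noteq> b l} = 1 \<longleftrightarrow> (\<exists>i. swap_at i a b)"
    if "a \<in> outcomes n m" "b \<in> outcomes n m"
  proof
    assume "card {l. l < n \<and> a l \<noteq> b l} = 1"
    then obtain i where i: "{l. l < n \<and> a l \<noteq> b l} = {i}" by (auto simp: card_1_singleton_iff)
    have "a l = b l" if "l \<noteq> i" for l
    proof (cases "l < n")
      case True
      then show ?thesis using i that by blast
    next
      case False
      then show ?thesis using outcome_undefined \<open>a \<in> _\<close> \<open>b \<in> _\<close> by metis
    qed
    then show "\<exists>i. swap_at i a b" using i by (auto simp: swap_at_def)
  next
    assume "\<exists>i. swap_at i a b"
    then obtain i where "swap_at i a b" by blast
    moreover from this have "i < n" using that swap_at_less by blast
    ultimately have "{l. l < n \<and> a l \<noteq> b l} = {i}" by (auto simp: swap_at_def)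
    then show "card {l. l < n \<and> a l \<noteq> b l} = 1" by simp
  qed
  then show ?thesis by (auto simp: swaps_def)
qed

lemma finite_outcomes: "finite (outcomes n m)"
  by (simp add: outcomes_def finite_PiE)

lemma finite_assignments: "finite Y \<Longrightarrow> finite (assignments Y m)"
  by (simp add: assignments_def finite_PiE)

lemma card_assignments: "finite Y \<Longrightarrow> card (assignments Y m) = m ^ card Y"
  by (simp add: assignments_def card_PiE)

lemma restrict_in_assignments: "a \<in> outcomes n m \<Longrightarrow> Y \<subseteq> {..<n} \<Longrightarrow> restrict a Y \<in> assignments Y m"
  by (auto simp: outcomes_def assignments_def)

lemma outcomes_eq_off_var:
  assumes "a \<in> outcomes n m" "a' \<in> outcomes n m" "restrict a' Y = restrict a Y"
    and "\<forall>l<n. l \<notin> Y \<and> l \<noteq> i \<longrightarrow> a l = 0" "\<forall>l<n. l \<notin> Y \<and> l \<noteq> i \<longrightarrow> a' l = 0"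
  shows "\<forall>l. l \<noteq> i \<longrightarrow> a' l = a l"
proof (intro allI impI)
  fix l assume "l \<noteq> i"
  consider "\<not> l < n" | "l \<in> Y" | "l < n" "l \<notin> Y" by blast
  then show "a' l = a l"
  proof cases
    case 1
    then show ?thesis using outcome_undefined assms(1,2) by metis
  next
    case 2
    then show ?thesis using assms(3) by (metis restrict_apply')
  next
    case 3
    then show ?thesis using assms(4,5) \<open>l \<noteq> i\<close> by simp
  qed
qed

definition zero_extension :: "nat \<Rightarrow> nat set \<Rightarrow> (nat \<Rightarrow> nat) \<Rightarrow> nat \<Rightarrow> nat" where
  "zero_extension n Y \<gamma> = (\<lambda>l. if l \<in> Y then \<gamma> l else if l < n then 0 else undefined)"

lemma zero_extension_in_outcomes:
  "Y \<subseteq> {..<n} \<Longrightarrow> \<gamma> \<in> assignments Y m \<Longrightarrow> 0 < m \<Longrightarrow> zero_extension n Y \<gamma> \<in> outcomes n m"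
  by (auto simp: zero_extension_def outcomes_def assignments_def PiE_def extensional_def)

lemma restrict_zero_extension: "\<gamma> \<in> assignments Y m \<Longrightarrow> restrict (zero_extension n Y \<gamma>) Y = \<gamma>"
  by (auto simp: zero_extension_def assignments_def PiE_def extensional_def fun_eq_iff)

section \<open>Ranks in strict linear orders\<close>

definition rank :: "'a rel \<Rightarrow> 'a \<Rightarrow> nat" where
  "rank r x = card {y. (x, y) \<in> r}"

lemma strict_linear_order_onD:
  assumes "strict_linear_order_on A r"
  shows "trans r" "(x, x) \<notin> r" "x \<in> A \<Longrightarrow> y \<in> A \<Longrightarrow> x \<noteq> y \<Longrightarrow> (x, y) \<in> r \<or> (y, x) \<in> r"
  using assms by (auto simp: strict_linear_order_on_def irrefl_def total_on_def)

lemma strict_linear_order_on_asym: "strict_linear_order_on A r \<Longrightarrow> (x, y) \<in> r \<Longrightarrow> (y, x) \<notin> r"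
  by (metis strict_linear_order_onD(1,2) transD)

lemma strict_linear_order_on_key:
  fixes g :: "'a \<Rightarrow> nat"
  assumes "inj_on g A"
  shows "strict_linear_order_on A {(p, q). p \<in> A \<and> q \<in> A \<and> g q < g p}"
proof -
  have "g p < g q \<or> g q < g p" if "p \<in> A" "q \<in> A" "p \<noteq> q" for p q
    using inj_onD[OF assms _ that(1,2)] that(3) by linarith
  then show ?thesis
    unfolding strict_linear_order_on_def trans_def irrefl_def total_on_def by auto
qed

lemma transpose_Suc_less_iff:
  fixes x y t :: nat
  assumes "x \<noteq> y"
  shows "transpose t (Suc t) y < transpose t (Suc t) x \<longleftrightarrow> (y < x \<longleftrightarrow> {x, y} \<noteq> {t, Suc t})"
  using assms unfolding transpose_def doubleton_eq_iff by auto

context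
  fixes A :: "'a set" and r :: "'a rel"
  assumes fin: "finite A" and sub: "r \<subseteq> A \<times> A" and slo: "strict_linear_order_on A r"
begin

lemma rank_less: "(x, y) \<in> r \<Longrightarrow> rank r y < rank r x"
  unfolding rank_def
proof (rule psubset_card_mono)
  show "finite {z. (x, z) \<in> r}" using fin sub by (auto intro: finite_subset)
  assume "(x, y) \<in> r"
  then show "{z. (y, z) \<in> r} \<subset> {z. (x, z) \<in> r}"
    using strict_linear_order_onD(1,2)[OF slo] by (auto dest: transD)
qed

lemma rank_less_iff: "x \<in> A \<Longrightarrow> y \<in> A \<Longrightarrow> (x, y) \<in> r \<longleftrightarrow> rank r y < rank r x"
proof
  assume "x \<in> A" "y \<in> A" "rank r y < rank r x"
  then consider "(x, y) \<in> r" | "(y, x) \<in> r" using strict_linear_order_onD(3)[OF slo] by blast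
  then show "(x, y) \<in> r"
  proof cases
    case 2
    with \<open>rank r y < rank r x\<close> show ?thesis using rank_less[of y x] by simp
  qed
qed (rule rank_less)

lemma inj_on_rank: "inj_on (rank r) A"
proof (rule inj_onI, rule ccontr)
  fix x y assume "x \<in> A" "y \<in> A" "rank r x = rank r y" "x \<noteq> y"
  then consider "(x, y) \<in> r" | "(y, x) \<in> r" using strict_linear_order_onD(3)[OF slo] by blast
  then show False using rank_less \<open>rank r x = rank r y\<close> by cases fastforce+
qed

lemma rank_image: "rank r ` A = {..<card A}"
proof (rule card_subset_eq)
  show "rank r ` A \<subseteq> {..<card A}"
  proof
    fix z assume "z \<in> rank r ` A"
    then obtain x where x: "x \<in> A" "z = rank r x" by auto
    have "{y. (x, y) \<in> r} \<subseteq> A - {x}" using sub strict_linear_order_onD(2)[OF slo] by auto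
    then have "rank r x \<le> card (A - {x})" unfolding rank_def by (intro card_mono) (use fin in auto)
    also have "\<dots> < card A" using fin x(1) by (rule card_Diff1_less)
    finally show "z \<in> {..<card A}" using x by simp
  qed
  show "card (rank r ` A) = card {..<card A}" using inj_on_rank by (simp add: card_image)
qed simp

lemma strict_linear_order_eqI_covering:
  assumes sub': "r' \<subseteq> A \<times> A" and slo': "strict_linear_order_on A r'"
    and covering: "\<And>p q. p \<in> A \<Longrightarrow> q \<in> A \<Longrightarrow> rank r p = Suc (rank r q) \<Longrightarrow> (p, q) \<in> r'"
  shows "r' = r"
proof -
  have chain: "(p, q) \<in> r'" if "p \<in> A" "q \<in> A" "rank r p = rank r q + Suc d" for d p q
    using that
  proof (induction d arbitrary: p)
    case (Suc d)
    have "rank r p < card A" using rank_image Suc.prems(1) by blast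
    then have "rank r q + Suc d \<in> rank r ` A" unfolding rank_image using Suc.prems(3) by simp
    then obtain w where w: "w \<in> A" "rank r w = rank r q + Suc d" by auto
    have "(p, w) \<in> r'" using covering Suc.prems w by simp
    moreover have "(w, q) \<in> r'" using Suc.IH w Suc.prems(2) by blast
    ultimately show ?case using strict_linear_order_onD(1)[OF slo'] by (rule transD[rotated])
  next
    case 0
    then show ?case using covering by simp
  qed
  then have "r \<subseteq> r'"
  proof (intro subsetI, clarify)
    fix p q assume pq: "(p, q) \<in> r"
    have "p \<in> A" "q \<in> A" using pq sub by auto
    moreover have "rank r q < rank r p" using pq by (rule rank_less)
    then obtain d where "rank r p = rank r q + Suc d" by (auto simp: less_iff_Suc_add)
    ultimately show "(p, q) \<in> r'" by (rule chain)
  qed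
  moreover have "r' \<subseteq> r"
  proof
    fix x assume x: "x \<in> r'"
    then obtain p q where pq: "x = (p, q)" "p \<in> A" "q \<in> A" using sub' by auto
    then have "p \<noteq> q" using x strict_linear_order_onD(2)[OF slo'] by blast
    show "x \<in> r"
    proof (rule ccontr)
      assume "x \<notin> r"
      then have "(q, p) \<in> r'" using pq \<open>p \<noteq> q\<close> \<open>r \<subseteq> r'\<close> strict_linear_order_onD(3)[OF slo] by blast
      then show False using x pq strict_linear_order_on_asym[OF slo'] by blast
    qed
  qed
  ultimately show ?thesis by blast
qed

definition transposed_order :: "nat \<Rightarrow> 'a rel" where
  "transposed_order t =
     {(p, q). p \<in> A \<and> q \<in> A \<and> transpose t (Suc t) (rank r q) < transpose t (Suc t) (rank r p)}"

lemma transposed_order: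
  "transposed_order t \<subseteq> A \<times> A" "strict_linear_order_on A (transposed_order t)"
proof -
  show "transposed_order t \<subseteq> A \<times> A" by (auto simp: transposed_order_def)
  have "inj_on (transpose t (Suc t) \<circ> rank r) A"
    using inj_on_rank by (simp add: comp_inj_on)
  from strict_linear_order_on_key[OF this]
  show "strict_linear_order_on A (transposed_order t)" by (simp add: transposed_order_def)
qed

lemma transposed_order_iff:
  assumes "p \<in> A" "q \<in> A" "p \<noteq> q"
  shows "(p, q) \<in> transposed_order t \<longleftrightarrow>
    ((p, q) \<in> r \<longleftrightarrow> \<not> ({rank r p, rank r q} = {t, Suc t}))"
proof -
  have "rank r p \<noteq> rank r q" using assms inj_on_rank by (auto dest: inj_onD)
  have "(p, q) \<in> transposed_order t \<longleftrightarrow> transpose t (Suc t) (rank r q) < transpose t (Suc t) (rank r p)"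
    using assms by (simp add: transposed_order_def)
  also have "\<dots> \<longleftrightarrow> (rank r q < rank r p \<longleftrightarrow> {rank r p, rank r q} \<noteq> {t, Suc t})"
    using \<open>rank r p \<noteq> rank r q\<close> by (rule transpose_Suc_less_iff)
  finally show ?thesis using rank_less_iff[OF assms(1,2)] by simp
qed

end

section \<open>Acyclic parent graphs\<close>

definition parent_graph :: "nat \<Rightarrow> (nat \<Rightarrow> nat set) \<Rightarrow> nat rel" where
  "parent_graph n P = {(j, i). i < n \<and> j \<in> P i}"

lemma ancestors_card_less:
  assumes P: "\<forall>i<n. P i \<subseteq> {..<n} - {i}" and ac: "acyclic (parent_graph n P)"
    and "i < n" "j \<in> P i"
  shows "card {l. (l, j) \<in> (parent_graph n P)\<^sup>+} < card {l. (l, i) \<in> (parent_graph n P)\<^sup>+}"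
proof (rule psubset_card_mono)
  let ?E = "parent_graph n P"
  have "?E \<subseteq> {..<n} \<times> {..<n}" using P by (auto simp: parent_graph_def)
  then have "?E\<^sup>+ \<subseteq> {..<n} \<times> {..<n}" by (rule trancl_subset_Sigma)
  then show "finite {l. (l, i) \<in> ?E\<^sup>+}" by (auto intro: finite_subset)
  have ji: "(j, i) \<in> ?E" using assms(3,4) by (auto simp: parent_graph_def)
  moreover have "(j, j) \<notin> ?E\<^sup>+" using ac by (auto simp: acyclic_def)
  ultimately show "{l. (l, j) \<in> ?E\<^sup>+} \<subset> {l. (l, i) \<in> ?E\<^sup>+}"
    by (blast intro: trancl_into_trancl)
qed

lemma topological_numbering:
  assumes P: "\<forall>i<n. P i \<subseteq> {..<n} - {i}" and ac: "acyclic (parent_graph n P)"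
  obtains \<pi> where "bij_betw \<pi> {..<n} {..<n}" and "\<And>i j. i < n \<Longrightarrow> j \<in> P i \<Longrightarrow> \<pi> j < \<pi> i"
proof -
  define h where "h i = card {l. (l, i) \<in> (parent_graph n P)\<^sup>+}" for i
  \<comment> \<open>ancestor counts increase along edges; adding the index breaks ties\<close>
  define key where "key i = h i * n + i" for i
  have key_inj: "inj_on key {..<n}"
  proof (rule inj_onI)
    fix x y assume xy: "x \<in> {..<n}" "y \<in> {..<n}" "key x = key y"
    then have "(x + h x * n) mod n = (y + h y * n) mod n" by (simp add: key_def add.commute)
    then have "x mod n = y mod n" by (simp only: mod_mult_self1)
    then show "x = y" using xy by simp
  qed
  have key_less: "key j < key i" if "i < n" "j \<in> P i" for i j
  proof -
    have "Suc (h j) \<le> h i" using ancestors_card_less[OF P ac that] by (simp add: h_def)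
    then have "Suc (h j) * n \<le> h i * n" by (rule mult_le_mono1)
    moreover have "j < n" using P that by blast
    ultimately show ?thesis unfolding key_def by simp
  qed
  define r where "r = {(p, q). p \<in> {..<n} \<and> q \<in> {..<n} \<and> key q < key p}"
  have r: "r \<subseteq> {..<n} \<times> {..<n}" "strict_linear_order_on {..<n} r"
    using strict_linear_order_on_key[OF key_inj] by (auto simp: r_def)
  show thesis
  proof
    show "bij_betw (rank r) {..<n} {..<n}"
      using inj_on_rank[OF finite_lessThan r] rank_image[OF finite_lessThan r] by (simp add: bij_betw_def)
    fix i j assume ij: "i < n" "j \<in> P i"
    then have "(i, j) \<in> r" using P key_less by (auto simp: r_def)
    then show "rank r j < rank r i" by (rule rank_less[OF finite_lessThan r])
  qed
qed

lemma card_bij_predecessors: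
  assumes "bij_betw \<pi> {..<n} {..<n}" "i < n"
  shows "card {j. j < n \<and> \<pi> j < \<pi> i} = \<pi> i"
proof -
  let ?E = "{j. j < n \<and> \<pi> j < \<pi> i}"
  have "\<pi> ` ?E = {..<\<pi> i}"
  proof
    show "\<pi> ` ?E \<subseteq> {..<\<pi> i}" by auto
    have "\<pi> i < n" using assms by (auto simp: bij_betw_def)
    then have "{..<\<pi> i} \<subseteq> \<pi> ` {..<n}" using assms(1) by (auto simp: bij_betw_def)
    then show "{..<\<pi> i} \<subseteq> \<pi> ` ?E" by auto
  qed
  moreover have "inj_on \<pi> ?E"
    using bij_betw_imp_inj_on[OF assms(1)] by (rule inj_on_subset) auto
  then have "card (\<pi> ` ?E) = card ?E" by (rule card_image)
  ultimately show ?thesis by simp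
qed

lemma exists_subset_between:
  assumes "finite E" "P \<subseteq> E" "card P \<le> c" "c \<le> card E"
  obtains C where "P \<subseteq> C" "C \<subseteq> E" "card C = c"
proof -
  have P_fin: "finite P" using assms(2,1) by (rule finite_subset)
  have "c - card P \<le> card (E - P)" using card_Diff_subset[OF P_fin assms(2)] assms(4) by simp
  then obtain T where T: "T \<subseteq> E - P" "card T = c - card P" "finite T"
    by (rule obtain_subset_with_card_n)
  have "card (P \<union> T) = card P + card T" using T P_fin by (intro card_Un_disjoint) auto
  then show thesis using that[of "P \<union> T"] T assms(2,3) by auto
qed

lemma family_eq_if_subset_and_card_sum_le:
  assumes I: "finite I" and sub: "\<And>i. i \<in> I \<Longrightarrow> A i \<subseteq> B i" and fin: "\<And>i. i \<in> I \<Longrightarrow> finite (B i)"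
    and sum: "(\<Sum>i\<in>I. card (B i)) \<le> (\<Sum>i\<in>I. card (A i))" and i: "i \<in> I"
  shows "A i = B i"
proof -
  have le: "card (A j) \<le> card (B j)" if "j \<in> I" for j using card_mono[OF fin[OF that] sub[OF that]] .
  have "card (A i) = card (B i)"
  proof (rule ccontr)
    assume "card (A i) \<noteq> card (B i)"
    then have "card (A i) < card (B i)" using le[OF i] by simp
    then have "(\<Sum>j\<in>I. card (A j)) < (\<Sum>j\<in>I. card (B j))"
      using le i by (intro sum_strict_mono_ex1[OF I]) auto
    with sum show False by simp
  qed
  then show ?thesis using card_subset_eq[OF fin[OF i] sub[OF i]] by simp
qed

lemma saturate_parent_graph:
  assumes P: "\<forall>i<n. P i \<subseteq> {..<n} - {i}" and P_acyclic: "acyclic (parent_graph n P)"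
    and P_card: "\<forall>i<n. card (P i) \<le> k"
  obtains G where "\<forall>i<n. P i \<subseteq> G i \<and> G i \<subseteq> {..<n} - {i} \<and> card (G i) \<le> k"
    and "acyclic (parent_graph n G)" and "(\<Sum>i<n. m ^ card (G i)) = (\<Sum>p<n. m ^ min p k)"
proof -
  obtain \<pi> where \<pi>: "bij_betw \<pi> {..<n} {..<n}" "\<And>i j. i < n \<Longrightarrow> j \<in> P i \<Longrightarrow> \<pi> j < \<pi> i"
    using P P_acyclic by (rule topological_numbering) auto
  define E where "E i = {j. j < n \<and> \<pi> j < \<pi> i}" for i
  have "\<forall>i\<in>{..<n}. \<exists>C. P i \<subseteq> C \<and> C \<subseteq> E i \<and> card C = min (\<pi> i) k"
  proof
    fix i assume "i \<in> {..<n}"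
    then have i: "i < n" by simp
    have E: "finite (E i)" "card (E i) = \<pi> i"
      using card_bij_predecessors[OF \<pi>(1) i] by (simp_all add: E_def)
    have PE: "P i \<subseteq> E i" using P \<pi>(2) i by (auto simp: E_def)
    have "card (P i) \<le> min (\<pi> i) k" using card_mono[OF E(1) PE] E(2) P_card i by simp
    then show "\<exists>C. P i \<subseteq> C \<and> C \<subseteq> E i \<and> card C = min (\<pi> i) k"
      using exists_subset_between[OF E(1) PE] E(2) by (metis min.cobounded1)
  qed
  from bchoice[OF this]
  obtain G where "\<forall>i\<in>{..<n}. P i \<subseteq> G i \<and> G i \<subseteq> E i \<and> card (G i) = min (\<pi> i) k" ..
  then have G: "\<And>i. i < n \<Longrightarrow> P i \<subseteq> G i \<and> G i \<subseteq> E i \<and> card (G i) = min (\<pi> i) k" by simp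
  show thesis
  proof
    show "\<forall>i<n. P i \<subseteq> G i \<and> G i \<subseteq> {..<n} - {i} \<and> card (G i) \<le> k"
    proof (intro allI impI)
      fix i assume "i < n"
      with G[OF this] show "P i \<subseteq> G i \<and> G i \<subseteq> {..<n} - {i} \<and> card (G i) \<le> k"
        by (auto simp: E_def)
    qed
    have "parent_graph n G \<subseteq> inv_image less_than \<pi>"
    proof (clarsimp simp: parent_graph_def)
      fix i j assume "i < n" "j \<in> G i"
      then show "\<pi> j < \<pi> i" using G[of i] by (auto simp: E_def)
    qed
    then show "acyclic (parent_graph n G)"
      by (rule acyclic_subset[OF wf_acyclic[OF wf_inv_image[OF wf_less_than]]])
    have "(\<Sum>i<n. m ^ card (G i)) = (\<Sum>i<n. m ^ min (\<pi> i) k)" using G by (intro sum.cong) auto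
    also have "\<dots> = (\<Sum>p<n. m ^ min p k)"
      using sum.reindex_bij_betw[OF \<pi>(1), of "\<lambda>p. m ^ min p k"] by simp
    finally show "(\<Sum>i<n. m ^ card (G i)) = (\<Sum>p<n. m ^ min p k)" .
  qed
qed

lemma sum_parent_powers_le:
  fixes m :: nat
  assumes "\<forall>i<n. P i \<subseteq> {..<n} - {i}" "acyclic (parent_graph n P)" "\<forall>i<n. card (P i) \<le> k"
    and "0 < m"
  shows "(\<Sum>i<n. m ^ card (P i)) \<le> (\<Sum>p<n. m ^ min p k)"
proof -
  obtain G where G: "\<forall>i<n. P i \<subseteq> G i \<and> G i \<subseteq> {..<n} - {i} \<and> card (G i) \<le> k"
    and sum_G: "(\<Sum>i<n. m ^ card (G i)) = (\<Sum>p<n. m ^ min p k)"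
    by (rule saturate_parent_graph[OF assms(1-3), of m])
  have "m ^ card (P i) \<le> m ^ card (G i)" if "i < n" for i
  proof -
    have "finite (G i)" using G that by (blast intro: finite_subset[of _ "{..<n}"])
    then have "card (P i) \<le> card (G i)" using G that by (blast intro: card_mono)
    then show ?thesis using \<open>0 < m\<close> by (intro power_increasing) auto
  qed
  then have "(\<Sum>i<n. m ^ card (P i)) \<le> (\<Sum>i<n. m ^ card (G i))" by (intro sum_mono) simp
  then show ?thesis using sum_G by simp
qed

section \<open>Swaps ordered by an acyclic CP-net\<close>

definition local_pref :: "cpnet \<Rightarrow> nat \<Rightarrow> (nat \<Rightarrow> nat) \<Rightarrow> nat rel" where
  "local_pref N i a = snd N i (restrict a (fst N i))"

lemma local_pref_cong: "(\<And>l. l \<in> fst N i \<Longrightarrow> a l = b l) \<Longrightarrow> local_pref N i a = local_pref N i b"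
  unfolding local_pref_def by (metis restrict_ext)

lemma complete_cpnetD:
  assumes "complete_cpnet n m N" "i < n"
  shows "fst N i \<subseteq> {..<n} - {i}"
    and "\<gamma> \<in> assignments (fst N i) m \<Longrightarrow>
      snd N i \<gamma> \<subseteq> {..<m} \<times> {..<m} \<and> strict_linear_order_on {..<m} (snd N i \<gamma>)"
    and "j \<in> fst N i \<Longrightarrow> \<exists>\<gamma>\<in>assignments (fst N i) m. \<exists>\<gamma>'\<in>assignments (fst N i) m.
      (\<forall>l\<in>fst N i - {j}. \<gamma> l = \<gamma>' l) \<and> snd N i \<gamma> \<noteq> snd N i \<gamma>'"
  using assms unfolding complete_cpnet_def Let_def by auto

lemma local_pref_order:
  assumes "complete_cpnet n m N" "i < n" "a \<in> outcomes n m"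
  shows "local_pref N i a \<subseteq> {..<m} \<times> {..<m}" "strict_linear_order_on {..<m} (local_pref N i a)"
  using complete_cpnetD(2)[OF assms(1,2) restrict_in_assignments[OF assms(3)]]
    complete_cpnetD(1)[OF assms(1,2)] by (auto simp: local_pref_def)

text \<open>For a topological numbering \<open>\<pi>\<close> this relation contains every improving flip and is
  transitive, so no sequence of improving flips can reverse the local preference of a swap.\<close>

definition leading_improvement :: "nat \<Rightarrow> nat \<Rightarrow> cpnet \<Rightarrow> (nat \<Rightarrow> nat) \<Rightarrow> ((nat \<Rightarrow> nat) \<times> (nat \<Rightarrow> nat)) set" where
  "leading_improvement n m N \<pi> = {(o1, o2). o1 \<in> outcomes n m \<and> o2 \<in> outcomes n m \<and>
     (\<exists>j<n. o1 j \<noteq> o2 j \<and> (\<forall>l<n. \<pi> l < \<pi> j \<longrightarrow> o1 l = o2 l) \<and> (o2 j, o1 j) \<in> local_pref N j o1)}"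

lemma leading_improvementI:
  "o1 \<in> outcomes n m \<Longrightarrow> o2 \<in> outcomes n m \<Longrightarrow> j < n \<Longrightarrow> o1 j \<noteq> o2 j \<Longrightarrow>
    \<forall>l<n. \<pi> l < \<pi> j \<longrightarrow> o1 l = o2 l \<Longrightarrow> (o2 j, o1 j) \<in> local_pref N j o1 \<Longrightarrow>
    (o1, o2) \<in> leading_improvement n m N \<pi>"
  unfolding leading_improvement_def by blast

context
  fixes n m :: nat and N :: cpnet and \<pi> :: "nat \<Rightarrow> nat"
  assumes complete: "complete_cpnet n m N"
    and \<pi>_inj: "inj_on \<pi> {..<n}" and \<pi>_parents: "\<And>i j. i < n \<Longrightarrow> j \<in> fst N i \<Longrightarrow> \<pi> j < \<pi> i"
begin

lemma local_pref_eq_if_agree_before: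
  assumes "j < n" "\<forall>l<n. \<pi> l < \<pi> j \<longrightarrow> o1 l = o2 l"
  shows "local_pref N j o1 = local_pref N j o2"
  using assms \<pi>_parents complete_cpnetD(1)[OF complete assms(1)] by (intro local_pref_cong) blast

lemma improving_flip_subset_leading_improvement:
  "improving_flip n m N \<subseteq> leading_improvement n m N \<pi>"
proof
  fix x assume "x \<in> improving_flip n m N"
  then obtain o1 o2 j where x: "x = (o1, o2)" "o1 \<in> outcomes n m" "o2 \<in> outcomes n m" "j < n"
    "\<forall>l. l \<noteq> j \<longrightarrow> o2 l = o1 l" "(o2 j, o1 j) \<in> local_pref N j o1"
    unfolding improving_flip_def local_pref_def by blast
  have "o1 j \<noteq> o2 j"
    using x(6) strict_linear_order_onD(2)[OF local_pref_order(2)[OF complete x(4,2)]] by metis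
  moreover have "\<forall>l<n. \<pi> l < \<pi> j \<longrightarrow> o1 l = o2 l" using x(5) by auto
  ultimately show "x \<in> leading_improvement n m N \<pi>"
    using x unfolding leading_improvement_def by blast
qed

text \<open>The \<open>\<pi>\<close>-first variable changed by the composite is the earlier of the two; if both
  coincide, the two improvements happen in the same context and compose by transitivity of the
  local order.\<close>

lemma trans_leading_improvement: "trans (leading_improvement n m N \<pi>)"
proof (rule transI)
  fix o1 o2 o3
  assume "(o1, o2) \<in> leading_improvement n m N \<pi>" "(o2, o3) \<in> leading_improvement n m N \<pi>"
  then obtain i j where o: "o1 \<in> outcomes n m" "o2 \<in> outcomes n m" "o3 \<in> outcomes n m"
    and i: "i < n" "o1 i \<noteq> o2 i" "\<forall>l<n. \<pi> l < \<pi> i \<longrightarrow> o1 l = o2 l" "(o2 i, o1 i) \<in> local_pref N i o1"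
    and j: "j < n" "o2 j \<noteq> o3 j" "\<forall>l<n. \<pi> l < \<pi> j \<longrightarrow> o2 l = o3 l" "(o3 j, o2 j) \<in> local_pref N j o2"
    unfolding leading_improvement_def by blast
  consider "\<pi> i < \<pi> j" | "\<pi> j < \<pi> i" | "i = j"
    using inj_onD[OF \<pi>_inj] i(1) j(1) by (metis lessThan_iff linorder_neqE_nat)
  then show "(o1, o3) \<in> leading_improvement n m N \<pi>"
  proof cases
    case 1
    then have "o3 i = o2 i" "\<forall>l<n. \<pi> l < \<pi> i \<longrightarrow> o1 l = o3 l" using i(1,3) j(3) by auto
    then show ?thesis using o i by (intro leading_improvementI[where j = i]) simp_all
  next
    case 2
    then have "o1 j = o2 j" "\<forall>l<n. \<pi> l < \<pi> j \<longrightarrow> o1 l = o3 l" using i(3) j(1,3) by auto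
    moreover have "local_pref N j o1 = local_pref N j o2"
      using 2 i(3) by (intro local_pref_eq_if_agree_before[OF j(1)]) auto
    ultimately show ?thesis using o j by (intro leading_improvementI[where j = j]) simp_all
  next
    case 3
    note order = local_pref_order(2)[OF complete i(1) o(1)]
    have "local_pref N i o1 = local_pref N i o2" by (rule local_pref_eq_if_agree_before[OF i(1,3)])
    then have "(o3 i, o1 i) \<in> local_pref N i o1"
      using i(4) j(4) 3 strict_linear_order_onD(1)[OF order] by (metis transD)
    moreover from this have "o1 i \<noteq> o3 i" using strict_linear_order_onD(2)[OF order] by metis
    moreover have "\<forall>l<n. \<pi> l < \<pi> i \<longrightarrow> o1 l = o3 l" using i(3) j(3) 3 by auto
    ultimately show ?thesis using o i(1) by (intro leading_improvementI[where j = i])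
  qed
qed

end

lemma cp_succ_swap_iff:
  assumes complete: "complete_cpnet n m N" and acyclic: "acyclic_cpnet n N"
    and a: "a \<in> outcomes n m" and b: "b \<in> outcomes n m" and swap: "swap_at i a b"
  shows "cp_succ n m N a b \<longleftrightarrow> (a i, b i) \<in> local_pref N i a"
proof -
  have i: "i < n" using a b swap by (rule swap_at_less)
  have "\<forall>j<n. fst N j \<subseteq> {..<n} - {j}" using complete_cpnetD(1)[OF complete] by blast
  moreover have "acyclic (parent_graph n (fst N))"
    using acyclic by (simp add: acyclic_cpnet_def parent_graph_def)
  ultimately obtain \<pi> where \<pi>: "bij_betw \<pi> {..<n} {..<n}" "\<And>i j. i < n \<Longrightarrow> j \<in> fst N i \<Longrightarrow> \<pi> j < \<pi> i"
    by (rule topological_numbering) auto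
  note \<pi>_inj = bij_betw_imp_inj_on[OF \<pi>(1)]
  have same_pref: "local_pref N i b = local_pref N i a"
    using swap complete_cpnetD(1)[OF complete i] by (intro local_pref_cong) (auto simp: swap_at_def)
  show ?thesis
  proof
    assume "cp_succ n m N a b"
    then have "(b, a) \<in> (leading_improvement n m N \<pi>)\<^sup>+"
      unfolding cp_succ_def
      using improving_flip_subset_leading_improvement[OF complete \<pi>_inj \<pi>(2)] by (rule trancl_mono)
    then have "(b, a) \<in> leading_improvement n m N \<pi>"
      using trancl_id[OF trans_leading_improvement[OF complete \<pi>_inj \<pi>(2)]] by simp
    then obtain j where "j < n" "b j \<noteq> a j" "(a j, b j) \<in> local_pref N j b"
      unfolding leading_improvement_def by blast
    moreover have "j = i" using \<open>b j \<noteq> a j\<close> swap by (metis swap_at_def)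
    ultimately show "(a i, b i) \<in> local_pref N i a" using same_pref by simp
  next
    assume "(a i, b i) \<in> local_pref N i a"
    then have "(b, a) \<in> improving_flip n m N"
      using a b i swap same_pref unfolding improving_flip_def local_pref_def swap_at_def by auto
    then show "cp_succ n m N a b" unfolding cp_succ_def by blast
  qed
qed

lemma cp_concept_swap_iff:
  assumes "complete_cpnet n m N" "acyclic_cpnet n N" "X \<subseteq> swaps n m" "(a, b) \<in> X" "swap_at i a b"
  shows "(a, b) \<in> cp_concept n m X N \<longleftrightarrow> (a i, b i) \<in> local_pref N i a"
proof -
  have ab: "a \<in> outcomes n m" "b \<in> outcomes n m" using assms(3,4) by (auto simp: swaps_iff)
  show ?thesis using assms(4) cp_succ_swap_iff[OF assms(1,2) ab assms(5)] by (simp add: cp_concept_def)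
qed

section \<open>Realising local orders by a CP-net\<close>

definition ac_net :: "nat \<Rightarrow> nat \<Rightarrow> nat \<Rightarrow> cpnet \<Rightarrow> bool" where
  "ac_net n m k N \<longleftrightarrow> complete_cpnet n m N \<and> acyclic_cpnet n N \<and> k_bounded_cpnet n k N"

lemma C_ac_eq: "C_ac n m k X = cp_concept n m X ` {N. ac_net n m k N}"
  by (simp add: C_ac_def ac_net_def)

definition relevant_coords :: "nat set \<Rightarrow> nat \<Rightarrow> ((nat \<Rightarrow> nat) \<Rightarrow> 'r) \<Rightarrow> nat set" where
  "relevant_coords G m F = {j \<in> G. \<exists>\<delta>\<in>assignments G m. \<exists>\<delta>'\<in>assignments G m.
     (\<forall>l\<in>G - {j}. \<delta> l = \<delta>' l) \<and> F \<delta> \<noteq> F \<delta>'}"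

lemma eq_if_agree_on_relevant_coords:
  assumes "finite G" "\<delta> \<in> assignments G m" "\<delta>' \<in> assignments G m"
    and "\<forall>l\<in>relevant_coords G m F. \<delta> l = \<delta>' l"
  shows "F \<delta> = F \<delta>'"
  using assms(2-4)
proof (induction "card {l \<in> G. \<delta> l \<noteq> \<delta>' l}" arbitrary: \<delta> rule: less_induct)
  case (less \<delta>)
  show ?case
  proof (cases "\<exists>l\<in>G. \<delta> l \<noteq> \<delta>' l")
    case False
    then have "\<delta> = \<delta>'" using less.prems(1,2) unfolding assignments_def by (intro PiE_ext) auto
    then show ?thesis by simp
  next
    case True
    then obtain l where l: "l \<in> G" "\<delta> l \<noteq> \<delta>' l" by blast
    \<comment> \<open>correct one disagreeing coordinate; it is irrelevant, so \<open>F\<close> does not change\<close>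
    define \<delta>1 where "\<delta>1 = \<delta>(l := \<delta>' l)"
    have \<delta>1: "\<delta>1 \<in> assignments G m" using less.prems(1,2) l(1)
      by (auto simp: \<delta>1_def assignments_def PiE_def extensional_def)
    have "l \<notin> relevant_coords G m F" using less.prems(3) l(2) by blast
    moreover have "\<forall>l'\<in>G - {l}. \<delta> l' = \<delta>1 l'" by (simp add: \<delta>1_def)
    ultimately have "F \<delta> = F \<delta>1" using l(1) less.prems(1) \<delta>1 unfolding relevant_coords_def by blast
    also have "F \<delta>1 = F \<delta>'"
    proof (rule less.hyps)
      have "{l' \<in> G. \<delta>1 l' \<noteq> \<delta>' l'} \<subset> {l' \<in> G. \<delta> l' \<noteq> \<delta>' l'}" using l by (auto simp: \<delta>1_def)
      then show "card {l' \<in> G. \<delta>1 l' \<noteq> \<delta>' l'} < card {l \<in> G. \<delta> l \<noteq> \<delta>' l}"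
        using assms(1) by (simp add: psubset_card_mono)
      show "\<forall>l\<in>relevant_coords G m F. \<delta>1 l = \<delta>' l"
        using less.prems(3) \<open>l \<notin> _\<close> by (auto simp: \<delta>1_def)
    qed (use \<delta>1 less.prems(2) in auto)
    finally show ?thesis .
  qed
qed

lemma relevant_coords_subset: "relevant_coords G m F \<subseteq> G"
  by (auto simp: relevant_coords_def)

lemma restrict_assignments_subset: "\<delta> \<in> assignments G m \<Longrightarrow> D \<subseteq> G \<Longrightarrow> restrict \<delta> D \<in> assignments D m"
  by (auto simp: assignments_def)

definition reduce_context :: "nat \<Rightarrow> nat set \<Rightarrow> nat \<Rightarrow> ((nat \<Rightarrow> nat) \<Rightarrow> 'r) \<Rightarrow> (nat \<Rightarrow> nat) \<Rightarrow> 'r" where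
  "reduce_context n G m F \<epsilon> = F (restrict (zero_extension n (relevant_coords G m F) \<epsilon>) G)"

context
  fixes n m :: nat and G :: "nat set" and F :: "(nat \<Rightarrow> nat) \<Rightarrow> 'r"
  assumes G: "G \<subseteq> {..<n}" and m: "0 < m"
begin

lemma restrict_zero_extension_relevant:
  assumes "\<epsilon> \<in> assignments (relevant_coords G m F) m"
  shows "restrict (zero_extension n (relevant_coords G m F) \<epsilon>) G \<in> assignments G m"
proof (rule restrict_in_assignments[OF zero_extension_in_outcomes[OF _ assms m] G])
  show "relevant_coords G m F \<subseteq> {..<n}" using relevant_coords_subset[of G m F] G by blast
qed

lemma reduce_context_restrict:
  assumes "\<delta> \<in> assignments G m"
  shows "reduce_context n G m F (restrict \<delta> (relevant_coords G m F)) = F \<delta>"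
  unfolding reduce_context_def
proof (rule eq_if_agree_on_relevant_coords)
  show "finite G" using G by (rule finite_subset) simp
  show "restrict (zero_extension n (relevant_coords G m F) (restrict \<delta> (relevant_coords G m F))) G
      \<in> assignments G m"
    by (intro restrict_zero_extension_relevant restrict_assignments_subset[OF assms]
      relevant_coords_subset)
  show "\<forall>l\<in>relevant_coords G m F.
      restrict (zero_extension n (relevant_coords G m F) (restrict \<delta> (relevant_coords G m F))) G l = \<delta> l"
    using relevant_coords_subset[of G m F] by (auto simp: zero_extension_def)
qed (rule assms)

lemma reduce_context_nondummy:
  assumes "j \<in> relevant_coords G m F"
  shows "\<exists>\<gamma>\<in>assignments (relevant_coords G m F) m. \<exists>\<gamma>'\<in>assignments (relevant_coords G m F) m.
    (\<forall>l\<in>relevant_coords G m F - {j}. \<gamma> l = \<gamma>' l) \<and> reduce_context n G m F \<gamma> \<noteq> reduce_context n G m F \<gamma>'"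
proof -
  let ?D = "relevant_coords G m F"
  obtain \<delta> \<delta>' where \<delta>: "\<delta> \<in> assignments G m" "\<delta>' \<in> assignments G m"
    "\<forall>l\<in>G - {j}. \<delta> l = \<delta>' l" "F \<delta> \<noteq> F \<delta>'"
    using assms unfolding relevant_coords_def by blast
  have "restrict \<delta> ?D \<in> assignments ?D m" "restrict \<delta>' ?D \<in> assignments ?D m"
    using \<delta>(1,2) relevant_coords_subset by (blast intro: restrict_assignments_subset)+
  moreover have "\<forall>l\<in>?D - {j}. restrict \<delta> ?D l = restrict \<delta>' ?D l"
    using \<delta>(3) relevant_coords_subset[of G m F] by auto
  ultimately show ?thesis
    using \<delta>(4) reduce_context_restrict[OF \<delta>(1)] reduce_context_restrict[OF \<delta>(2)] by metis
qed

end

text \<open>Taking as parents only the coordinates the given local orders actually depend on makes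
  every parent non-dummy.\<close>

lemma ac_net_realising_local_orders:
  assumes m: "0 < m" and G: "\<forall>i<n. G i \<subseteq> {..<n} - {i}" and G_acyclic: "acyclic (parent_graph n G)"
    and G_card: "\<forall>i<n. card (G i) \<le> k"
    and f: "\<And>i \<delta>. i < n \<Longrightarrow> \<delta> \<in> assignments (G i) m \<Longrightarrow>
      f i \<delta> \<subseteq> {..<m} \<times> {..<m} \<and> strict_linear_order_on {..<m} (f i \<delta>)"
  obtains N where "ac_net n m k N"
    and "\<And>i a. i < n \<Longrightarrow> a \<in> outcomes n m \<Longrightarrow> local_pref N i a = f i (restrict a (G i))"
proof -
  define N :: cpnet where "N = (\<lambda>i. relevant_coords (G i) m (f i), \<lambda>i. reduce_context n (G i) m (f i))"
  have DG: "fst N i \<subseteq> G i" for i by (simp add: N_def relevant_coords_subset)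
  have G_sub: "G i \<subseteq> {..<n}" if "i < n" for i using G that by blast
  have local_pref_N: "local_pref N i a = f i (restrict a (G i))" if "i < n" "a \<in> outcomes n m" for i a
  proof -
    have "restrict a (fst N i) = restrict (restrict a (G i)) (relevant_coords (G i) m (f i))"
      using DG[of i] by (auto simp: N_def Int_absorb1)
    then show ?thesis
      using reduce_context_restrict[OF G_sub[OF that(1)] m restrict_in_assignments[OF that(2) G_sub[OF that(1)]]]
      by (simp add: local_pref_def N_def)
  qed
  have "complete_cpnet n m N"
    unfolding complete_cpnet_def Let_def
  proof (intro conjI allI impI ballI)
    fix i assume i: "i < n"
    show "fst N i \<subseteq> {..<n} - {i}" using DG G i by blast
    fix \<gamma> assume "\<gamma> \<in> assignments (fst N i) m"
    then have "restrict (zero_extension n (fst N i) \<gamma>) (G i) \<in> assignments (G i) m"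
      using restrict_zero_extension_relevant[OF G_sub[OF i] m] by (simp add: N_def)
    then show "snd N i \<gamma> \<subseteq> {..<m} \<times> {..<m}" "strict_linear_order_on {..<m} (snd N i \<gamma>)"
      using f[OF i] by (simp_all add: N_def reduce_context_def)
  next
    fix i j assume "i < n" "j \<in> fst N i"
    then show "\<exists>\<gamma>\<in>assignments (fst N i) m. \<exists>\<gamma>'\<in>assignments (fst N i) m.
        (\<forall>l\<in>fst N i - {j}. \<gamma> l = \<gamma>' l) \<and> snd N i \<gamma> \<noteq> snd N i \<gamma>'"
      using reduce_context_nondummy[OF G_sub m] by (simp add: N_def)
  qed
  moreover have "acyclic_cpnet n N"
    unfolding acyclic_cpnet_def
    by (rule acyclic_subset[OF G_acyclic[unfolded parent_graph_def]]) (use DG in auto)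
  moreover have "k_bounded_cpnet n k N"
    unfolding k_bounded_cpnet_def
    using G_card card_mono[OF finite_subset[OF G_sub finite_lessThan] DG] le_trans by blast
  ultimately show thesis using local_pref_N by (intro that) (simp_all add: ac_net_def)
qed

section \<open>Coding swaps by variable, context and rank\<close>

definition swap_var :: "(nat \<Rightarrow> nat) \<times> (nat \<Rightarrow> nat) \<Rightarrow> nat" where
  "swap_var x = (LEAST i. fst x i \<noteq> snd x i)"

lemma swap_var_eq: "swap_at i a b \<Longrightarrow> swap_var (a, b) = i"
  unfolding swap_var_def swap_at_def by (rule Least_equality) auto

text \<open>\<open>R i a\<close> is the order on the values of variable \<open>i\<close> used in outcome \<open>a\<close>.\<close>

definition swap_code :: "(nat \<Rightarrow> nat set) \<Rightarrow> (nat \<Rightarrow> (nat \<Rightarrow> nat) \<Rightarrow> nat rel) \<Rightarrow>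
    (nat \<Rightarrow> nat) \<times> (nat \<Rightarrow> nat) \<Rightarrow> nat \<times> (nat \<Rightarrow> nat) \<times> nat" where
  "swap_code G R x = (let a = fst x; b = snd x; i = swap_var x in
     (i, restrict a (G i), min (rank (R i a) (a i)) (rank (R i a) (b i))))"

lemma swap_code_eq:
  "swap_at i a b \<Longrightarrow>
    swap_code G R (a, b) = (i, restrict a (G i), min (rank (R i a) (a i)) (rank (R i a) (b i)))"
  by (simp add: swap_code_def swap_var_eq)

definition code_space :: "nat \<Rightarrow> nat \<Rightarrow> (nat \<Rightarrow> nat set) \<Rightarrow> (nat \<times> (nat \<Rightarrow> nat) \<times> nat) set" where
  "code_space n m G = (SIGMA i:{..<n}. assignments (G i) m \<times> {..<m - 1})"

lemma card_code_space:
  assumes "\<forall>i<n. finite (G i)"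
  shows "card (code_space n m G) = (m - 1) * (\<Sum>i<n. m ^ card (G i))"
proof -
  have "card (code_space n m G) = (\<Sum>i<n. card (assignments (G i) m \<times> {..<m - 1}))"
    unfolding code_space_def using assms by (intro card_SigmaI) (auto intro: finite_assignments)
  also have "\<dots> = (\<Sum>i<n. (m - 1) * m ^ card (G i))"
    using assms by (intro sum.cong) (auto simp: card_cartesian_product card_assignments)
  finally show ?thesis by (simp add: sum_distrib_left)
qed

section \<open>The number \<open>\<M>\<^sub>k\<close>\<close>

lemma geometric_sum_nat:
  fixes m :: nat
  assumes "0 < m"
  shows "(m - 1) * (\<Sum>p<k. m ^ p) = m ^ k - 1"
proof -
  obtain m' where m': "m = Suc m'" using assms by (cases m) auto
  have "m' * (\<Sum>p<k. Suc m' ^ p) + 1 = Suc m' ^ k"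
    by (induction k) (simp_all add: algebra_simps)
  then show ?thesis using m' by simp
qed

lemma sum_power_min_eq:
  "k \<le> n \<Longrightarrow> (\<Sum>p<n. m ^ min p k) = (\<Sum>p<k. m ^ p) + (n - k) * (m :: nat) ^ k"
proof -
  assume "k \<le> n"
  then have split: "{..<n} = {..<k} \<union> {k..<n}" by auto
  have "(\<Sum>p<n. m ^ min p k) = (\<Sum>p<k. m ^ min p k) + (\<Sum>p\<in>{k..<n}. m ^ min p k)"
    unfolding split by (rule sum.union_disjoint) auto
  also have "(\<Sum>p<k. m ^ min p k) = (\<Sum>p<k. m ^ p)" by (rule sum.cong) auto
  also have "(\<Sum>p\<in>{k..<n}. m ^ min p k) = (n - k) * m ^ k" by simp
  finally show ?thesis .
qed

lemma M_k_eq: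
  assumes m: "2 \<le> m" and "k \<le> n"
  shows "(\<Sum>p<n. m ^ min p k) = M_k n m k"
    and "(m - 1) * M_k n m k = (m - 1) * (n - k) * m ^ k + m ^ k - 1"
proof -
  have geom: "(m - 1) * (\<Sum>p<k. m ^ p) = m ^ k - 1" using m by (intro geometric_sum_nat) simp
  have div: "(m ^ k - 1) div (m - 1) = (\<Sum>p<k. m ^ p)" unfolding geom[symmetric] using m by simp
  then show "(\<Sum>p<n. m ^ min p k) = M_k n m k"
    using sum_power_min_eq[OF \<open>k \<le> n\<close>] by (simp add: M_k_def)
  have "(m - 1) * M_k n m k = (m - 1) * ((n - k) * m ^ k) + (m - 1) * (\<Sum>p<k. m ^ p)"
    unfolding M_k_def div by (rule distrib_left)
  also have "\<dots> = (m - 1) * (n - k) * m ^ k + (m ^ k - 1)" unfolding geom by (simp only: mult.assoc)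
  finally have "(m - 1) * M_k n m k = (m - 1) * (n - k) * m ^ k + (m ^ k - 1)" .
  moreover have "1 \<le> m ^ k" using m by simp
  then have "(m - 1) * (n - k) * m ^ k + m ^ k - 1 = (m - 1) * (n - k) * m ^ k + (m ^ k - 1)"
    by simp
  ultimately show "(m - 1) * M_k n m k = (m - 1) * (n - k) * m ^ k + m ^ k - 1" by simp
qed

section \<open>Recursive teaching dimension\<close>

lemma TD_le_card: "teaching_set X C c S \<Longrightarrow> TD X C c \<le> card S"
  unfolding TD_def by (rule Least_le) blast

lemma TD_attained:
  assumes "finite X" "c \<in> C" "\<forall>c'\<in>C. c' \<subseteq> X"
  obtains S where "teaching_set X C c S" "card S = TD X C c"
proof -
  have "c' = c" if "c' \<in> C" "\<forall>x\<in>X. x \<in> c' \<longleftrightarrow> x \<in> c" for c'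
    using that assms(2,3) by blast
  then have "teaching_set X C c X" using assms(1) by (simp add: teaching_set_def)
  then have "\<exists>t S. teaching_set X C c S \<and> card S = t" by blast
  then have "\<exists>S. teaching_set X C c S \<and> card S = TD X C c" unfolding TD_def by (rule LeastI_ex)
  then show thesis using that by blast
qed

lemma rtd_layer_subset: "rtd_layer X C i \<subseteq> C"
  by (induction i) (auto simp: Let_def)

text \<open>The first layer has minimal teaching dimension \<open>V\<close>, and no later layer exceeds it.\<close>

lemma RTD_eqI:
  assumes X: "finite X" and C: "\<forall>c\<in>C. c \<subseteq> X" "C \<noteq> {}"
    and lower: "\<And>c S. c \<in> C \<Longrightarrow> teaching_set X C c S \<Longrightarrow> V \<le> card S"
    and upper: "\<And>L. L \<subseteq> C \<Longrightarrow> L \<noteq> {} \<Longrightarrow> \<exists>c\<in>L. \<exists>S. teaching_set X L c S \<and> card S \<le> V"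
  shows "RTD X C = V"
proof -
  have "C \<subseteq> Pow X" using C(1) by blast
  then have C_fin: "finite C" using X by (simp add: finite_subset)
  have TD_min_le: "TD_min X L \<le> V" if L: "L \<subseteq> C" "L \<noteq> {}" for L
  proof -
    obtain c S where c: "c \<in> L" "teaching_set X L c S" "card S \<le> V" using upper[OF L] by blast
    have "TD_min X L \<le> TD X L c"
      unfolding TD_min_def using c(1) finite_subset[OF L(1) C_fin] by (intro Min_le) auto
    also have "\<dots> \<le> card S" using c(2) by (rule TD_le_card)
    finally show ?thesis using c(3) by simp
  qed
  have V_le_TD: "V \<le> TD X C c" if c: "c \<in> C" for c
  proof -
    obtain S where S: "teaching_set X C c S" "card S = TD X C c" using TD_attained[OF X c C(1)] .
    from lower[OF c S(1)] S(2) show ?thesis by simp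
  qed
  have "V \<le> TD_min X C" unfolding TD_min_def using C_fin C(2) V_le_TD by (intro Min.boundedI) auto
  with TD_min_le[OF subset_refl C(2)] have TD_min_C: "TD_min X C = V" by (rule antisym)
  define T where "T = {TD_min X (rtd_layer X C i) | i. rtd_layer X C i \<noteq> {}}"
  have T_le: "t \<le> V" if t: "t \<in> T" for t
  proof -
    obtain i where "t = TD_min X (rtd_layer X C i)" "rtd_layer X C i \<noteq> {}"
      using t unfolding T_def by blast
    then show ?thesis using TD_min_le[OF rtd_layer_subset] by simp
  qed
  then have "finite T" by (meson finite_atMost finite_subset atMost_iff subsetI)
  moreover have "V \<in> T"
    unfolding T_def mem_Collect_eq using TD_min_C C(2) by (intro exI[of _ 0]) simp
  ultimately have "Max T = V" using Max_eqI[of T V] T_le by blast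
  then show ?thesis unfolding RTD_def T_def .
qed

locale swap_instance_space =
  fixes n m :: nat and X :: "((nat \<Rightarrow> nat) \<times> (nat \<Rightarrow> nat)) set"
  assumes m_pos: "0 < m" and space: "is_swap_instance_space n m X"
begin

lemma X_subset_swaps: "X \<subseteq> swaps n m"
  using space by (simp add: is_swap_instance_space_def)

lemma finite_X: "finite X"
proof (rule finite_subset)
  show "X \<subseteq> outcomes n m \<times> outcomes n m" using X_subset_swaps by (auto simp: swaps_iff)
  show "finite (outcomes n m \<times> outcomes n m)" using finite_outcomes by simp
qed

lemma X_elem:
  assumes "x \<in> X"
  obtains a b i where "x = (a, b)" "a \<in> outcomes n m" "b \<in> outcomes n m" "i < n" "swap_at i a b"
proof -
  obtain a b where ab: "x = (a, b)" by (cases x)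
  then have "(a, b) \<in> swaps n m" using assms X_subset_swaps by blast
  then obtain i where "a \<in> outcomes n m" "b \<in> outcomes n m" "swap_at i a b" by (auto simp: swaps_iff)
  moreover from this have "i < n" by (rule swap_at_less)
  ultimately show thesis using ab that by blast
qed

lemma swap_orientation_cases:
  assumes "c \<in> outcomes n m" "i < n" "p < m" "q < m" "p \<noteq> q"
  obtains "(c(i := p), c(i := q)) \<in> X" | "(c(i := q), c(i := p)) \<in> X"
proof -
  have "(c(i := p), c(i := q)) \<in> swaps n m"
    using outcome_upd[OF assms(1-3)] outcome_upd[OF assms(1,2,4)] swap_at_upd[OF assms(5)]
    unfolding swaps_iff by blast
  then have "(c(i := p), c(i := q)) \<in> X \<or> (c(i := q), c(i := p)) \<in> X"
    using space unfolding is_swap_instance_space_def by blast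
  with that show thesis by blast
qed

lemma X_asym: "(a, b) \<in> X \<Longrightarrow> (b, a) \<notin> X"
  using space X_subset_swaps unfolding is_swap_instance_space_def by blast

lemma cp_concept_subset: "cp_concept n m X N \<subseteq> X"
  by (auto simp: cp_concept_def)

lemma ac_net_concept_swap_iff:
  "ac_net n m k N \<Longrightarrow> (a, b) \<in> X \<Longrightarrow> swap_at i a b \<Longrightarrow>
    (a, b) \<in> cp_concept n m X N \<longleftrightarrow> (a i, b i) \<in> local_pref N i a"
  unfolding ac_net_def using cp_concept_swap_iff[OF _ _ X_subset_swaps] by blast

section \<open>Lower bound\<close>

lemma exists_net_transposing_context:
  assumes N: "ac_net n m k N"
    and G: "\<forall>j<n. fst N j \<subseteq> G j \<and> G j \<subseteq> {..<n} - {j} \<and> card (G j) \<le> k"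
      "acyclic (parent_graph n G)"
  obtains N' where "ac_net n m k N'"
    and "\<forall>j<n. \<forall>a\<in>outcomes n m. local_pref N' j a =
      (if j = i \<and> restrict a (G i) = \<gamma> then transposed_order {..<m} (local_pref N i a) t
       else local_pref N j a)"
proof -
  have complete: "complete_cpnet n m N" using N by (simp add: ac_net_def)
  define f where "f j \<delta> = snd N j (restrict \<delta> (fst N j))" for j \<delta>
  define f' where "f' j \<delta> =
    (if j = i \<and> \<delta> = \<gamma> then transposed_order {..<m} (f i \<delta>) t else f j \<delta>)" for j \<delta>
  have local_pref_N: "local_pref N j a = f j (restrict a (G j))" if "j < n" for j a
    using G(1) that by (simp add: local_pref_def f_def Int_absorb1)
  have f_order: "f j \<delta> \<subseteq> {..<m} \<times> {..<m} \<and> strict_linear_order_on {..<m} (f j \<delta>)"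
    if "j < n" "\<delta> \<in> assignments (G j) m" for j \<delta>
  proof -
    have "restrict \<delta> (fst N j) \<in> assignments (fst N j) m"
      using that G(1) by (auto simp: assignments_def)
    then show ?thesis unfolding f_def by (rule complete_cpnetD(2)[OF complete that(1)])
  qed
  have f'_order: "f' j \<delta> \<subseteq> {..<m} \<times> {..<m} \<and> strict_linear_order_on {..<m} (f' j \<delta>)"
    if j: "j < n" "\<delta> \<in> assignments (G j) m" for j \<delta>
  proof (cases "j = i \<and> \<delta> = \<gamma>")
    case True
    with f_order[OF j] transposed_order[OF finite_lessThan, of "f i \<delta>" m t] show ?thesis
      by (simp add: f'_def)
  next
    case False
    show ?thesis unfolding f'_def if_not_P[OF False] by (rule f_order[OF j])
  qed
  have G_graph: "\<forall>j<n. G j \<subseteq> {..<n} - {j}" "\<forall>j<n. card (G j) \<le> k" using G(1) by blast+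
  obtain N' where N': "ac_net n m k N'"
    and local_pref_N': "\<And>j a. j < n \<Longrightarrow> a \<in> outcomes n m \<Longrightarrow> local_pref N' j a = f' j (restrict a (G j))"
    using ac_net_realising_local_orders[where f = f', OF m_pos G_graph(1) G(2) G_graph(2) f'_order] by blast
  show thesis
  proof (rule that[OF N'], intro allI impI ballI)
    fix j a assume ja: "j < n" "a \<in> outcomes n m"
    then show "local_pref N' j a = (if j = i \<and> restrict a (G i) = \<gamma>
      then transposed_order {..<m} (local_pref N i a) t else local_pref N j a)"
      using local_pref_N'[OF ja] local_pref_N[OF ja(1)] by (cases "j = i") (simp_all add: f'_def)
  qed
qed

lemma label_after_transposition:
  assumes N: "ac_net n m k N" and N': "ac_net n m k N'"
    and N'_pref: "\<forall>j<n. \<forall>a\<in>outcomes n m. local_pref N' j a =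
      (if j = i \<and> restrict a (G i) = \<gamma> then transposed_order {..<m} (local_pref N i a) t
       else local_pref N j a)"
    and x: "(a, b) \<in> X" "swap_at j a b"
  shows "(a, b) \<in> cp_concept n m X N' \<longleftrightarrow> ((a, b) \<in> cp_concept n m X N \<longleftrightarrow>
    \<not> (j = i \<and> restrict a (G i) = \<gamma> \<and>
      {rank (local_pref N i a) (a i), rank (local_pref N i a) (b i)} = {t, Suc t}))"
proof -
  have ab: "a \<in> outcomes n m" "b \<in> outcomes n m" using x(1) X_subset_swaps by (auto simp: swaps_iff)
  have j: "j < n" using ab x(2) by (rule swap_at_less)
  note label_N = ac_net_concept_swap_iff[OF N x]
  note label_N' = ac_net_concept_swap_iff[OF N' x]
  show ?thesis
  proof (cases "j = i \<and> restrict a (G i) = \<gamma>")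
    case False
    then have "\<not> (j = i \<and> restrict a (G i) = \<gamma> \<and>
      {rank (local_pref N i a) (a i), rank (local_pref N i a) (b i)} = {t, Suc t})" by blast
    then show ?thesis
      using label_N label_N' N'_pref[rule_format, OF j ab(1)] unfolding if_not_P[OF False] by simp
  next
    case True
    then have ji: "j = i" and ctx: "restrict a (G i) = \<gamma>" by auto
    have complete: "complete_cpnet n m N" using N by (simp add: ac_net_def)
    have "a i \<in> {..<m}" "b i \<in> {..<m}" "a i \<noteq> b i"
      using outcome_less ab j x(2) by (auto simp: swap_at_def ji)
    then show ?thesis
      using label_N label_N' N'_pref[rule_format, OF j ab(1)] ctx
        transposed_order_iff[OF finite_lessThan local_pref_order[OF complete j ab(1)]]
      unfolding ji by simp
  qed
qed

lemma exists_adjacent_swap_in_context: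
  assumes complete: "complete_cpnet n m N" and i: "i < n"
    and Y: "fst N i \<subseteq> Y" "Y \<subseteq> {..<n} - {i}" and \<gamma>: "\<gamma> \<in> assignments Y m" and t: "t < m - 1"
  obtains a b where "(a, b) \<in> X" "swap_at i a b" "restrict a Y = \<gamma>"
    "{rank (local_pref N i a) (a i), rank (local_pref N i a) (b i)} = {t, Suc t}"
proof -
  note result = that
  define c where "c = zero_extension n Y \<gamma>"
  have c: "c \<in> outcomes n m" "restrict c Y = \<gamma>"
    using zero_extension_in_outcomes[OF _ \<gamma> m_pos] restrict_zero_extension[OF \<gamma>] Y(2)
    by (auto simp: c_def)
  let ?r = "local_pref N i c"
  have c_upd: "restrict (c(i := v)) Y = \<gamma>" "local_pref N i (c(i := v)) = ?r" for v
  proof -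
    have "i \<notin> Y" using Y(2) by blast
    then show "restrict (c(i := v)) Y = \<gamma>" using c(2) by simp
    show "local_pref N i (c(i := v)) = ?r" using Y by (intro local_pref_cong) auto
  qed
  have "rank ?r ` {..<m} = {..<m}"
    using rank_image[OF finite_lessThan local_pref_order[OF complete i c(1)]] by simp
  then have "t \<in> rank ?r ` {..<m}" "Suc t \<in> rank ?r ` {..<m}" using t by auto
  then obtain p q where pq: "p < m" "q < m" "rank ?r p = t" "rank ?r q = Suc t" by force
  then have "p \<noteq> q" by auto
  have found: thesis
    if uv: "(c(i := u), c(i := v)) \<in> X" "(u = p \<and> v = q) \<or> (u = q \<and> v = p)" for u v
  proof (rule result[OF uv(1)])
    show "swap_at i (c(i := u)) (c(i := v))" using uv(2) \<open>p \<noteq> q\<close> by (intro swap_at_upd) auto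
    show "restrict (c(i := u)) Y = \<gamma>" by (rule c_upd(1))
    show "{rank (local_pref N i (c(i := u))) ((c(i := u)) i),
        rank (local_pref N i (c(i := u))) ((c(i := v)) i)} = {t, Suc t}"
      using uv(2) pq c_upd(2) by auto
  qed
  from swap_orientation_cases[OF c(1) i pq(1,2) \<open>p \<noteq> q\<close>] show thesis
    using found by blast
qed

text \<open>A teaching set of \<open>N\<close> contains a swap of every code \<open>(i, \<gamma>, t)\<close>: otherwise exchanging
  the values of ranks \<open>t\<close> and \<open>t + 1\<close> in the local order of \<open>i\<close> in context \<open>\<gamma>\<close> gives a different
  net that agrees with \<open>N\<close> on the teaching set.\<close>

lemma code_space_subset_codes_of_teaching_set:
  assumes N: "ac_net n m k N" and S: "teaching_set X (C_ac n m k X) (cp_concept n m X N) S"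
    and G: "\<forall>j<n. fst N j \<subseteq> G j \<and> G j \<subseteq> {..<n} - {j} \<and> card (G j) \<le> k"
      "acyclic (parent_graph n G)"
  shows "code_space n m G \<subseteq> swap_code G (local_pref N) ` S"
proof
  fix \<tau> assume "\<tau> \<in> code_space n m G"
  then obtain i \<gamma> t where \<tau>: "\<tau> = (i, \<gamma>, t)" and i: "i < n"
    and \<gamma>: "\<gamma> \<in> assignments (G i) m" and t: "t < m - 1"
    by (auto simp: code_space_def)
  have complete: "complete_cpnet n m N" using N by (simp add: ac_net_def)
  obtain N' where N': "ac_net n m k N'"
    and N'_pref: "\<forall>j<n. \<forall>a\<in>outcomes n m. local_pref N' j a =
      (if j = i \<and> restrict a (G i) = \<gamma> then transposed_order {..<m} (local_pref N i a) t
       else local_pref N j a)"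
    using exists_net_transposing_context[OF N G] by blast
  note label = label_after_transposition[where G = G and i = i, OF N N' N'_pref]
  have agree: "x \<in> cp_concept n m X N' \<longleftrightarrow> x \<in> cp_concept n m X N"
    if x: "x \<in> X" "swap_code G (local_pref N) x \<noteq> \<tau>" for x
  proof -
    obtain a b j where ab: "x = (a, b)" "swap_at j a b" using x(1) by (rule X_elem)
    have "\<not> (j = i \<and> restrict a (G i) = \<gamma> \<and>
        {rank (local_pref N i a) (a i), rank (local_pref N i a) (b i)} = {t, Suc t})"
    proof
      assume "j = i \<and> restrict a (G i) = \<gamma> \<and>
        {rank (local_pref N i a) (a i), rank (local_pref N i a) (b i)} = {t, Suc t}"
      then have "swap_code G (local_pref N) x = \<tau>"
        using swap_code_eq[OF ab(2)] by (auto simp: ab(1) \<tau> doubleton_eq_iff)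
      with x(2) show False ..
    qed
    then show ?thesis using label[OF _ ab(2)] x(1) ab(1) by simp
  qed
  obtain a b where ab: "(a, b) \<in> X" "swap_at i a b" "restrict a (G i) = \<gamma>"
    and ranks: "{rank (local_pref N i a) (a i), rank (local_pref N i a) (b i)} = {t, Suc t}"
    using exists_adjacent_swap_in_context[OF complete i _ _ \<gamma> t] G(1) i by blast
  have "swap_code G (local_pref N) (a, b) = \<tau>"
    using swap_code_eq[OF ab(2)] ab(3) ranks by (auto simp: \<tau> doubleton_eq_iff)
  moreover have "\<not> ((a, b) \<in> cp_concept n m X N' \<longleftrightarrow> (a, b) \<in> cp_concept n m X N)"
    using label[OF ab(1,2)] ab(3) ranks by simp
  moreover have "cp_concept n m X N' \<in> C_ac n m k X" using N' by (auto simp: C_ac_eq)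
  moreover have "x \<in> cp_concept n m X N' \<longleftrightarrow> x \<in> cp_concept n m X N"
    if "x \<in> S" "\<tau> \<notin> swap_code G (local_pref N) ` S" for x
  proof (rule agree)
    show "x \<in> X" using S that(1) by (auto simp: teaching_set_def)
    show "swap_code G (local_pref N) x \<noteq> \<tau>" using that by blast
  qed
  ultimately show "\<tau> \<in> swap_code G (local_pref N) ` S"
    using S ab(1) unfolding teaching_set_def by blast
qed

lemma card_teaching_set_ge:
  assumes N: "ac_net n m k N" and S: "teaching_set X (C_ac n m k X) (cp_concept n m X N) S"
  shows "(m - 1) * (\<Sum>p<n. m ^ min p k) \<le> card S"
proof -
  have complete: "complete_cpnet n m N" using N by (simp add: ac_net_def)
  have "\<forall>j<n. fst N j \<subseteq> {..<n} - {j}" using complete_cpnetD(1)[OF complete] by blast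
  moreover have "acyclic (parent_graph n (fst N))" "\<forall>j<n. card (fst N j) \<le> k"
    using N by (simp_all add: ac_net_def acyclic_cpnet_def k_bounded_cpnet_def parent_graph_def)
  ultimately obtain G where G: "\<forall>j<n. fst N j \<subseteq> G j \<and> G j \<subseteq> {..<n} - {j} \<and> card (G j) \<le> k"
      "acyclic (parent_graph n G)" and sum_G: "(\<Sum>j<n. m ^ card (G j)) = (\<Sum>p<n. m ^ min p k)"
    by (rule saturate_parent_graph)
  have "finite S" using S by (simp add: teaching_set_def)
  have "\<forall>j<n. finite (G j)" using G(1) by (blast intro: finite_subset[of _ "{..<n}"])
  then have "(m - 1) * (\<Sum>p<n. m ^ min p k) = card (code_space n m G)"
    using sum_G by (simp add: card_code_space)
  also have "\<dots> \<le> card (swap_code G (local_pref N) ` S)"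
    using code_space_subset_codes_of_teaching_set[OF N S G] \<open>finite S\<close> by (intro card_mono) auto
  also have "\<dots> \<le> card S" by (rule card_image_le[OF \<open>finite S\<close>])
  finally show ?thesis .
qed

section \<open>Upper bound\<close>

definition covering_sample :: "cpnet \<Rightarrow> ((nat \<Rightarrow> nat) \<times> (nat \<Rightarrow> nat)) set" where
  "covering_sample N = {(a, b) \<in> X. \<exists>i. swap_at i a b \<and> (\<forall>l<n. l \<notin> fst N i \<and> l \<noteq> i \<longrightarrow> a l = 0) \<and>
     (rank (local_pref N i a) (a i) = Suc (rank (local_pref N i a) (b i)) \<or>
      rank (local_pref N i a) (b i) = Suc (rank (local_pref N i a) (a i)))}"

lemma local_pref_eq_if_agree_on_covering_sample:
  assumes N: "ac_net n m k N" and N': "ac_net n m k N'"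
    and agree: "\<forall>x\<in>covering_sample N. x \<in> cp_concept n m X N' \<longleftrightarrow> x \<in> cp_concept n m X N"
    and i: "i < n" and a: "a \<in> outcomes n m" and zero: "\<forall>l<n. l \<notin> fst N i \<and> l \<noteq> i \<longrightarrow> a l = 0"
  shows "local_pref N' i a = local_pref N i a"
proof -
  have complete: "complete_cpnet n m N" "complete_cpnet n m N'" using N N' by (simp_all add: ac_net_def)
  let ?r = "local_pref N i a" and ?r' = "local_pref N' i a"
  note r = local_pref_order[OF complete(1) i a] and r' = local_pref_order[OF complete(2) i a]
  have upd: "local_pref N i (a(i := v)) = ?r" "local_pref N' i (a(i := v)) = ?r'" for v
  proof -
    show "local_pref N i (a(i := v)) = ?r"
      using complete_cpnetD(1)[OF complete(1) i] by (intro local_pref_cong) auto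
    show "local_pref N' i (a(i := v)) = ?r'"
      using complete_cpnetD(1)[OF complete(2) i] by (intro local_pref_cong) auto
  qed
  have sample: "(a(i := u), a(i := v)) \<in> covering_sample N"
    if "(a(i := u), a(i := v)) \<in> X" "u \<noteq> v" "rank ?r u = Suc (rank ?r v) \<or> rank ?r v = Suc (rank ?r u)"
    for u v
    using that zero swap_at_upd[OF that(2)] upd(1) unfolding covering_sample_def by auto
  show ?thesis
  proof (rule strict_linear_order_eqI_covering[OF finite_lessThan r r'])
    fix p q assume "p \<in> {..<m}" "q \<in> {..<m}" and pq: "rank ?r p = Suc (rank ?r q)"
    then have p: "p < m" and q: "q < m" and "p \<noteq> q" by auto
    have "(p, q) \<in> ?r" using rank_less_iff[OF finite_lessThan r] p q pq by simp
    from swap_orientation_cases[OF a i p q \<open>p \<noteq> q\<close>] show "(p, q) \<in> ?r'"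
    proof cases
      case 1
      note label = ac_net_concept_swap_iff[OF _ 1 swap_at_upd[OF \<open>p \<noteq> q\<close>]]
      have "(a(i := p), a(i := q)) \<in> cp_concept n m X N" using label[OF N] upd \<open>(p, q) \<in> ?r\<close> by simp
      then show ?thesis using agree sample[OF 1 \<open>p \<noteq> q\<close>] pq label[OF N'] upd by simp
    next
      case 2
      note label = ac_net_concept_swap_iff[OF _ 2 swap_at_upd[OF \<open>p \<noteq> q\<close>[symmetric]]]
      have "(q, p) \<notin> ?r" using strict_linear_order_on_asym[OF r(2) \<open>(p, q) \<in> ?r\<close>] .
      then have "(a(i := q), a(i := p)) \<notin> cp_concept n m X N" using label[OF N] upd by simp
      then have "(q, p) \<notin> ?r'"
        using agree sample[OF 2 \<open>p \<noteq> q\<close>[symmetric]] pq label[OF N'] upd by simp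
      then show ?thesis using strict_linear_order_onD(3)[OF r'(2)] p q \<open>p \<noteq> q\<close> by blast
    qed
  qed
qed

lemma parents_subset_if_agree_on_covering_sample:
  assumes N: "ac_net n m k N" and N': "ac_net n m k N'"
    and agree: "\<forall>x\<in>covering_sample N. x \<in> cp_concept n m X N' \<longleftrightarrow> x \<in> cp_concept n m X N"
    and i: "i < n"
  shows "fst N i \<subseteq> fst N' i"
proof
  fix j assume j: "j \<in> fst N i"
  have complete: "complete_cpnet n m N" "complete_cpnet n m N'" using N N' by (simp_all add: ac_net_def)
  have Pa: "fst N i \<subseteq> {..<n}" "i \<notin> fst N i" using complete_cpnetD(1)[OF complete(1) i] by auto
  obtain \<gamma> \<gamma>' where \<gamma>: "\<gamma> \<in> assignments (fst N i) m" "\<gamma>' \<in> assignments (fst N i) m"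
    and off_j: "\<forall>l\<in>fst N i - {j}. \<gamma> l = \<gamma>' l" and differ: "snd N i \<gamma> \<noteq> snd N i \<gamma>'"
    using complete_cpnetD(3)[OF complete(1) i j] by blast
  \<comment> \<open>\<open>N'\<close> has the local orders of \<open>N\<close> in two contexts that differ only at \<open>j\<close>\<close>
  have pref_N': "local_pref N' i (zero_extension n (fst N i) \<delta>) = snd N i \<delta>"
    if "\<delta> \<in> assignments (fst N i) m" for \<delta>
  proof -
    have "zero_extension n (fst N i) \<delta> \<in> outcomes n m"
      using zero_extension_in_outcomes[OF Pa(1) that m_pos] .
    moreover have "\<forall>l<n. l \<notin> fst N i \<and> l \<noteq> i \<longrightarrow> zero_extension n (fst N i) \<delta> l = 0"
      by (simp add: zero_extension_def)
    ultimately have "local_pref N' i (zero_extension n (fst N i) \<delta>) = local_pref N i (zero_extension n (fst N i) \<delta>)"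
      by (rule local_pref_eq_if_agree_on_covering_sample[OF N N' agree i])
    then show ?thesis using restrict_zero_extension[OF that] by (simp add: local_pref_def)
  qed
  show "j \<in> fst N' i"
  proof (rule ccontr)
    assume "j \<notin> fst N' i"
    then have "local_pref N' i (zero_extension n (fst N i) \<gamma>) = local_pref N' i (zero_extension n (fst N i) \<gamma>')"
      using off_j by (intro local_pref_cong) (auto simp: zero_extension_def)
    with differ show False using pref_N'[OF \<gamma>(1)] pref_N'[OF \<gamma>(2)] by simp
  qed
qed

lemma covering_sample_teaches:
  assumes L: "L \<subseteq> C_ac n m k X" and N: "ac_net n m k N" "cp_concept n m X N \<in> L"
    and maximal: "\<And>N'. ac_net n m k N' \<Longrightarrow> cp_concept n m X N' \<in> L \<Longrightarrow>
      (\<Sum>i<n. card (fst N' i)) \<le> (\<Sum>i<n. card (fst N i))"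
  shows "teaching_set X L (cp_concept n m X N) (covering_sample N)"
  unfolding teaching_set_def
proof (intro conjI ballI impI)
  show "covering_sample N \<subseteq> X" by (auto simp: covering_sample_def)
  then show "finite (covering_sample N)" using finite_X by (rule finite_subset)
  fix c' assume c': "c' \<in> L" and agree: "\<forall>x\<in>covering_sample N. x \<in> c' \<longleftrightarrow> x \<in> cp_concept n m X N"
  obtain N' where N': "ac_net n m k N'" and c'_eq: "c' = cp_concept n m X N'"
    using L c' by (auto simp: C_ac_eq)
  have complete: "complete_cpnet n m N" "complete_cpnet n m N'" using N(1) N' by (simp_all add: ac_net_def)
  note agree' = agree[unfolded c'_eq]
  have parents: "fst N' i = fst N i" if "i < n" for i
  proof (rule family_eq_if_subset_and_card_sum_le[of "{..<n}", symmetric])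
    show "fst N j \<subseteq> fst N' j" if "j \<in> {..<n}" for j
      using parents_subset_if_agree_on_covering_sample[OF N(1) N' agree'] that by simp
    show "finite (fst N' j)" if "j \<in> {..<n}" for j
      using complete_cpnetD(1)[OF complete(2)] that by (auto intro: finite_subset)
    show "(\<Sum>j<n. card (fst N' j)) \<le> (\<Sum>j<n. card (fst N j))"
      using maximal[OF N'] c' c'_eq by simp
  qed (use that in simp_all)
  have "x \<in> cp_concept n m X N' \<longleftrightarrow> x \<in> cp_concept n m X N" if x: "x \<in> X" for x
  proof -
    obtain a b i where ab: "x = (a, b)" "a \<in> outcomes n m" "i < n" "swap_at i a b"
      using x by (rule X_elem)
    \<comment> \<open>compare both local orders at the outcome with the same parent context and zeros elsewhere\<close>
    define c where "c = zero_extension n (fst N i) (restrict a (fst N i))"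
    have Pa: "fst N i \<subseteq> {..<n}" using complete_cpnetD(1)[OF complete(1) ab(3)] by blast
    have ctx: "restrict a (fst N i) \<in> assignments (fst N i) m" using restrict_in_assignments[OF ab(2) Pa] .
    have "local_pref N' i c = local_pref N i c"
    proof (rule local_pref_eq_if_agree_on_covering_sample[OF N(1) N' agree' ab(3)])
      show "c \<in> outcomes n m" unfolding c_def using zero_extension_in_outcomes[OF Pa ctx m_pos] .
      show "\<forall>l<n. l \<notin> fst N i \<and> l \<noteq> i \<longrightarrow> c l = 0" by (simp add: c_def zero_extension_def)
    qed
    moreover have "local_pref N i c = local_pref N i a" "local_pref N' i c = local_pref N' i a"
      using parents[OF ab(3)] by (auto intro!: local_pref_cong simp: c_def zero_extension_def)
    ultimately show ?thesis
      using ac_net_concept_swap_iff[OF N(1)] ac_net_concept_swap_iff[OF N'] x ab by simp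
  qed
  then show "c' = cp_concept n m X N" using c'_eq cp_concept_subset by blast
qed

lemma covering_sampleE:
  assumes "x \<in> covering_sample N"
  obtains a b i where "x = (a, b)" "(a, b) \<in> X" "a \<in> outcomes n m" "i < n" "swap_at i a b"
    "\<forall>l<n. l \<notin> fst N i \<and> l \<noteq> i \<longrightarrow> a l = 0"
    "{rank (local_pref N i a) (a i), rank (local_pref N i a) (b i)} =
      {min (rank (local_pref N i a) (a i)) (rank (local_pref N i a) (b i)),
       Suc (min (rank (local_pref N i a) (a i)) (rank (local_pref N i a) (b i)))}"
proof -
  obtain a b i where ab: "x = (a, b)" "(a, b) \<in> X" "swap_at i a b"
    "\<forall>l<n. l \<notin> fst N i \<and> l \<noteq> i \<longrightarrow> a l = 0"
    "rank (local_pref N i a) (a i) = Suc (rank (local_pref N i a) (b i)) \<or>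
     rank (local_pref N i a) (b i) = Suc (rank (local_pref N i a) (a i))"
    using assms unfolding covering_sample_def by blast
  have ab_out: "a \<in> outcomes n m" "b \<in> outcomes n m"
    using ab(2) X_subset_swaps by (auto simp: swaps_iff)
  then have "i < n" using ab(3) by (rule swap_at_less)
  have adjacent: "{x, y} = {min x y, Suc (min x y)}" if "x = Suc y \<or> y = Suc x" for x y :: nat
    using that by auto
  show thesis using that[OF ab(1,2) ab_out(1) \<open>i < n\<close> ab(3,4) adjacent[OF ab(5)]] .
qed

lemma swap_code_covering_sample_subset:
  assumes complete: "complete_cpnet n m N"
  shows "swap_code (fst N) (local_pref N) ` covering_sample N \<subseteq> code_space n m (fst N)"
proof (rule image_subsetI)
  fix x assume "x \<in> covering_sample N"
  then obtain a b i where ab: "x = (a, b)" "(a, b) \<in> X" "a \<in> outcomes n m" "i < n" "swap_at i a b"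
    and ranks: "{rank (local_pref N i a) (a i), rank (local_pref N i a) (b i)} =
      {min (rank (local_pref N i a) (a i)) (rank (local_pref N i a) (b i)),
       Suc (min (rank (local_pref N i a) (a i)) (rank (local_pref N i a) (b i)))}"
    by (rule covering_sampleE)
  let ?r = "local_pref N i a"
  have "b \<in> outcomes n m" using ab(2) X_subset_swaps by (auto simp: swaps_iff)
  then have "a i \<in> {..<m}" "b i \<in> {..<m}" using outcome_less ab(3,4) by auto
  moreover have "card {..<m} = m" by simp
  then have "rank ?r ` {..<m} = {..<m}"
    using rank_image[OF finite_lessThan local_pref_order[OF complete ab(4,3)]] by simp
  ultimately have "rank ?r (a i) \<in> {..<m}" "rank ?r (b i) \<in> {..<m}" by (metis imageI)+
  moreover have "Suc (min (rank ?r (a i)) (rank ?r (b i))) \<in> {rank ?r (a i), rank ?r (b i)}"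
    unfolding ranks by simp
  ultimately have "min (rank ?r (a i)) (rank ?r (b i)) < m - 1" by auto
  moreover have "restrict a (fst N i) \<in> assignments (fst N i) m"
    using complete_cpnetD(1)[OF complete ab(4)] by (intro restrict_in_assignments[OF ab(3)]) auto
  ultimately show "swap_code (fst N) (local_pref N) x \<in> code_space n m (fst N)"
    using swap_code_eq[OF ab(5)] ab(1,4) by (simp add: code_space_def)
qed

lemma inj_on_swap_code_covering_sample:
  assumes complete: "complete_cpnet n m N"
  shows "inj_on (swap_code (fst N) (local_pref N)) (covering_sample N)"
proof (rule inj_onI)
  fix x x' assume x: "x \<in> covering_sample N" and x': "x' \<in> covering_sample N"
    and code: "swap_code (fst N) (local_pref N) x = swap_code (fst N) (local_pref N) x'"
  obtain a b i where ab: "x = (a, b)" "(a, b) \<in> X" "a \<in> outcomes n m" "i < n" "swap_at i a b"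
    "\<forall>l<n. l \<notin> fst N i \<and> l \<noteq> i \<longrightarrow> a l = 0"
    and ranks: "{rank (local_pref N i a) (a i), rank (local_pref N i a) (b i)} =
      {min (rank (local_pref N i a) (a i)) (rank (local_pref N i a) (b i)),
       Suc (min (rank (local_pref N i a) (a i)) (rank (local_pref N i a) (b i)))}"
    using x by (rule covering_sampleE)
  obtain a' b' i' where ab': "x' = (a', b')" "(a', b') \<in> X" "a' \<in> outcomes n m" "i' < n"
    "swap_at i' a' b'" "\<forall>l<n. l \<notin> fst N i' \<and> l \<noteq> i' \<longrightarrow> a' l = 0"
    and ranks': "{rank (local_pref N i' a') (a' i'), rank (local_pref N i' a') (b' i')} =
      {min (rank (local_pref N i' a') (a' i')) (rank (local_pref N i' a') (b' i')),
       Suc (min (rank (local_pref N i' a') (a' i')) (rank (local_pref N i' a') (b' i')))}"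
    using x' by (rule covering_sampleE)
  have "(i, restrict a (fst N i), min (rank (local_pref N i a) (a i)) (rank (local_pref N i a) (b i))) =
      (i', restrict a' (fst N i'), min (rank (local_pref N i' a') (a' i')) (rank (local_pref N i' a') (b' i')))"
    (is "?code = ?code'")
    using code unfolding ab(1) ab'(1) swap_code_eq[OF ab(5)] swap_code_eq[OF ab'(5)] .
  then have i': "i' = i" by simp
  from \<open>?code = ?code'\<close>[unfolded i']
  have ctx: "restrict a' (fst N i) = restrict a (fst N i)"
    and min_eq: "min (rank (local_pref N i a') (a' i)) (rank (local_pref N i a') (b' i)) =
      min (rank (local_pref N i a) (a i)) (rank (local_pref N i a) (b i))"
    by simp_all
  have same_pref: "local_pref N i a' = local_pref N i a"
    unfolding local_pref_def using ctx by (metis restrict_restrict inf.idem)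
  have off_i: "\<forall>l. l \<noteq> i \<longrightarrow> a' l = a l"
    using outcomes_eq_off_var[OF ab(3) ab'(3) ctx ab(6)] ab'(6) unfolding i' by blast
  let ?r = "local_pref N i a"
  have "rank ?r ` {a' i, b' i} = rank ?r ` {a i, b i}"
    using ranks ranks'[unfolded i' same_pref] min_eq[unfolded same_pref] by simp
  moreover have "b \<in> outcomes n m" "b' \<in> outcomes n m"
    using ab(2) ab'(2) X_subset_swaps by (auto simp: swaps_iff)
  then have "{a i, b i} \<subseteq> {..<m}" "{a' i, b' i} \<subseteq> {..<m}"
    using ab(3,4) ab'(3) outcome_less by auto
  ultimately have "{a' i, b' i} = {a i, b i}"
    using inj_on_image_eq_iff[OF inj_on_rank[OF finite_lessThan local_pref_order[OF complete ab(4,3)]]]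
    by blast
  then have "(a', b') = (a, b) \<or> (a', b') = (b, a)"
    using swap_at_eq_cases[OF ab(5) ab'(5)[unfolded i'] off_i] by blast
  then show "x = x'" using ab(1,2) ab'(1,2) X_asym by blast
qed

lemma card_covering_sample_le:
  assumes complete: "complete_cpnet n m N"
  shows "card (covering_sample N) \<le> (m - 1) * (\<Sum>i<n. m ^ card (fst N i))"
proof -
  have fin: "\<forall>i<n. finite (fst N i)"
    using complete_cpnetD(1)[OF complete] by (blast intro: finite_subset[of _ "{..<n}"])
  then have "finite (code_space n m (fst N))"
    unfolding code_space_def by (auto intro!: finite_SigmaI finite_assignments)
  then have "card (covering_sample N) \<le> card (code_space n m (fst N))"
    by (rule card_inj_on_le[OF inj_on_swap_code_covering_sample[OF complete]
      swap_code_covering_sample_subset[OF complete]])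
  also have "\<dots> = (m - 1) * (\<Sum>i<n. m ^ card (fst N i))" using fin by (rule card_code_space)
  finally show ?thesis .
qed

text \<open>A net of \<open>L\<close> with the most parents is taught by its covering sample.\<close>

lemma exists_concept_with_small_teaching_set:
  assumes L: "L \<subseteq> C_ac n m k X" "L \<noteq> {}"
  shows "\<exists>c\<in>L. \<exists>S. teaching_set X L c S \<and> card S \<le> (m - 1) * (\<Sum>p<n. m ^ min p k)"
proof -
  define P where "P N \<longleftrightarrow> ac_net n m k N \<and> cp_concept n m X N \<in> L" for N
  define s where "s N = (\<Sum>i<n. card (fst N i))" for N :: cpnet
  obtain c where "c \<in> L" using L(2) by blast
  then obtain N0 where "P N0" using L(1) unfolding P_def C_ac_eq by blast
  moreover have "\<forall>N. P N \<longrightarrow> s N < n * k + 1"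
  proof (intro allI impI)
    fix N assume "P N"
    then have "\<forall>i<n. card (fst N i) \<le> k" by (simp add: P_def ac_net_def k_bounded_cpnet_def)
    then have "s N \<le> (\<Sum>i<n. k)" unfolding s_def by (intro sum_mono) simp
    then show "s N < n * k + 1" by simp
  qed
  ultimately obtain N where N: "P N" and maximal: "\<And>N'. P N' \<Longrightarrow> s N' \<le> s N"
    using Lattices_Big.ex_has_greatest_nat[of P N0 s] by blast
  have ac: "ac_net n m k N" and NL: "cp_concept n m X N \<in> L" using N by (simp_all add: P_def)
  have complete: "complete_cpnet n m N" using ac by (simp add: ac_net_def)
  have "teaching_set X L (cp_concept n m X N) (covering_sample N)"
    using maximal by (intro covering_sample_teaches[OF L(1) ac NL]) (simp add: P_def s_def)
  moreover have "(\<Sum>i<n. m ^ card (fst N i)) \<le> (\<Sum>p<n. m ^ min p k)"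
  proof (rule sum_parent_powers_le[OF _ _ _ m_pos])
    show "\<forall>i<n. fst N i \<subseteq> {..<n} - {i}" using complete_cpnetD(1)[OF complete] by blast
    show "acyclic (parent_graph n (fst N))" "\<forall>i<n. card (fst N i) \<le> k"
      using ac by (simp_all add: ac_net_def acyclic_cpnet_def k_bounded_cpnet_def parent_graph_def)
  qed
  then have "card (covering_sample N) \<le> (m - 1) * (\<Sum>p<n. m ^ min p k)"
    using card_covering_sample_le[OF complete] by (meson le_trans mult_le_mono2)
  ultimately show ?thesis using NL by blast
qed

lemma C_ac_nonempty: "C_ac n m k X \<noteq> {}"
proof -
  let ?lt = "{(p, q). p \<in> {..<m} \<and> q \<in> {..<m} \<and> q < p}"
  have order: "?lt \<subseteq> {..<m} \<times> {..<m} \<and> strict_linear_order_on {..<m} ?lt"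
    using strict_linear_order_on_key[of id "{..<m}"] by auto
  obtain N where "ac_net n m k N"
  proof (rule ac_net_realising_local_orders[OF m_pos, of n "\<lambda>_. {}" k "\<lambda>_ _. ?lt"])
    show "\<forall>i<n. {} \<subseteq> {..<n} - {i}" "\<forall>i<n. card {} \<le> k" by simp_all
    show "acyclic (parent_graph n (\<lambda>_. {}))" by (simp add: parent_graph_def acyclic_def)
  qed (use order that in blast)+
  then have "cp_concept n m X N \<in> C_ac n m k X" by (simp add: C_ac_eq)
  then show ?thesis by blast
qed

end

theorem theorem2:
  fixes n m k :: nat and X :: "((nat \<Rightarrow> nat) \<times> (nat \<Rightarrow> nat)) set"
  assumes "n \<ge> 1" and "m \<ge> 2" and "k < n"
    and "is_swap_instance_space n m X"
  shows "RTD X (C_ac n m k X) = (m - 1) * M_k n m k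
       \<and> RTD X (C_ac n m k X) = (m - 1) * (n - k) * m ^ k + m ^ k - 1"
proof -
  interpret swap_instance_space n m X
    using assms(2,4) by unfold_locales simp_all
  have "RTD X (C_ac n m k X) = (m - 1) * (\<Sum>p<n. m ^ min p k)"
  proof (rule RTD_eqI[OF finite_X _ C_ac_nonempty])
    show "\<forall>c\<in>C_ac n m k X. c \<subseteq> X" using cp_concept_subset by (auto simp: C_ac_eq)
    show "(m - 1) * (\<Sum>p<n. m ^ min p k) \<le> card S"
      if "c \<in> C_ac n m k X" "teaching_set X (C_ac n m k X) c S" for c S
      using that card_teaching_set_ge by (auto simp: C_ac_eq)
  qed (rule exists_concept_with_small_teaching_set)
  then show ?thesis using M_k_eq[OF assms(2)] assms(3) by simp
qed

end
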